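(* Assume the context distribution is stationary, i.e. $p(x,t)=p(x)p(t)$ on $\mathcal{X}\times[0,T]$ and $p(x\mid t')=p(x)$. Suppose $\pi_0(a\mid x,t)>0$ for all $x\in\mathcal{X}$, $t\in[0,T]$, $a\in\mathcal{A}$; that $p(\phi(t'))>0$; and that $\Delta_q(x,t,t',a)=\Delta_{\hat f}(x,t,t',a)$ for all $x\in\mathcal{X}$, $a\in\mathcal{A}$ and $t\in[0,T]$ with $\mathbb{I}_\phi(t,t')=1$. Then $$n\,\mathbb{V}_{\mathcal{D}}\big[\nabla_\zeta\hat V^{\mathrm{OPFV}}_{t'}(\pi_\zeta;\mathcal{D})\big]=\mathbb{E}_{p(x,t)\pi_0(a\mid x,t)}\!\left[\Big(\frac{\mathbb{I}_\phi(t,t')}{p(\phi(t'))}\frac{\pi_\zeta(a\mid x,t')}{\pi_0(a\mid x,t)}s_\zeta(x,t',a)\Big)^2\sigma^2(x,t,a)\right]$$ $$+\mathbb{E}_{p(x,t)}\!\left[\Big(\frac{\mathbb{I}_\phi(t,t')}{p(\phi(t'))}\Big)^2\mathbb{V}_{\pi_0(a\mid x,t)}\!\Big[\frac{\pi_\zeta(a\mid x,t')}{\pi_0(a\mid x,t)}\Delta_{q,\hat f}(x,t',a)s_\zeta(x,t',a)\Big]\right]$$ $$+\mathbb{V}_{p(t)}\!\left[\frac{\mathbb{I}_\phi(t,t')}{p(\phi(t'))}\right]\mathbb{E}_{p(x)}\!\left[\mathbb{E}_{\pi_\zeta(a\mid x,t')}\big[\Delta_{q,\hat f}(x,t',a)s_\zeta(x,t',a)\big]^2\right]+\mathbb{V}_{p(x)}\!\left[\mathbb{E}_{\pi_\zeta(a\mid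 x,t')}[q(x,t',a)s_\zeta(x,t',a)]\right].$$
   Context: Contexts $x\in\mathcal{X}$, finite action set $\mathcal{A}$, continuous time $t$, rewards $r\in[0,r_{\max}]$. Logged data $\mathcal{D}=\{(x_i,t_i,a_i,r_i)\}_{i=1}^n$: $n$ i.i.d. draws $(x,t)\sim p(x,t)$ supported on $\mathcal{X}\times[0,T]$, $a\sim\pi_0(a\mid x,t)$, $r\sim p(r\mid x,t,a)$; reward distributions defined for all $t\ge0$; $q(x,t,a)=\mathbb{E}[r\mid x,t,a]$, $\sigma^2(x,t,a)=\mathbb{V}[r\mid x,t,a]$. Target time $t'>T$. $\pi_\zeta(a\mid x,t)$ is a policy differentiable in a parameter vector $\zeta$, with score $s_\zeta(x,t,a)=\nabla_\zeta\log\pi_\zeta(a\mid x,t)$. A time feature function $\phi$ maps times to labels; $\mathbb{I}_\phi(t,t')=\mathbb{I}\{\phi(t)=\phi(t')\}$, $p(\phi(t'))=\int_0^Tp(s)\mathbb{I}_\phi(s,t')ds$ with $p(t)$ the marginal density of $t$. $\hat f$ is a fixed regressor. The OPFV gradient estimator is $$\nabla_\zeta\hat V^{\mathrm{OPFV}}_{t'}(\pi_\zeta;\mathcal{D})=\frac1n\sum_{i=1}^n\left\{\frac{\mathbb{I}_\phi(t_i,t')}{p(\phi(t'))}\frac{\pi_\zeta(a_i\mid x_i,t')}{\pi_0(a_i\mid x_i,t_i)}\big(r_i-\hat f(x_i,t_i,a_i)\big)s_\zeta(x_i,t',a_i)+\mathbb{E}_{\pi_\zeta(a\mid x_i,t')}\big[\hat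 f(x_i,t',a)s_\zeta(x_i,t',a)\big]\right\}.$$ $\Delta_q(x,t,t',a)=q(x,t,a)-q(x,t',a)$, $\Delta_{\hat f}(x,t,t',a)=\hat f(x,t,a)-\hat f(x,t',a)$, $\Delta_{q,\hat f}(x,t,a)=q(x,t,a)-\hat f(x,t,a)$. Variances and squares of vector-valued quantities are understood coordinatewise (the identity holds for each coordinate of $\zeta$, with $s_\zeta$ replaced by its corresponding coordinate). *)

theory Defs
  imports "HOL-Probability.Probability"
begin

definition Ex :: "'b measure \<Rightarrow> ('b \<Rightarrow> real) \<Rightarrow> real" where
  "Ex M f = (\<integral>y. f y \<partial>M)"

definition Var :: "'b measure \<Rightarrow> ('b \<Rightarrow> real) \<Rightarrow> real" where
  "Var M f = (\<integral>y. (f y - Ex M f)\<^sup>2 \<partial>M)"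

definition aexp :: "('a::finite \<Rightarrow> real) \<Rightarrow> ('a \<Rightarrow> real) \<Rightarrow> real" where
  "aexp w g = (\<Sum>a\<in>UNIV. w a * g a)"

definition avar :: "('a::finite \<Rightarrow> real) \<Rightarrow> ('a \<Rightarrow> real) \<Rightarrow> real" where
  "avar w g = (\<Sum>a\<in>UNIV. w a * (g a - aexp w g)\<^sup>2)"

definition actdist :: "('a::finite \<Rightarrow> real) \<Rightarrow> 'a measure" where
  "actdist w = density (count_space UNIV) (\<lambda>a. ennreal (w a))"

text \<open>Law of one logged sample (x,t,a,r): (x,t) ~ px \<times> pt (stationary contexts),
  a ~ pi0(.|x,t), r ~ R x t a.\<close>
definition sample_law ::
  "'x measure \<Rightarrow> real measure \<Rightarrow> ('x \<Rightarrow> real \<Rightarrow> 'a::finite \<Rightarrow> real)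
    \<Rightarrow> ('x \<Rightarrow> real \<Rightarrow> 'a \<Rightarrow> real measure) \<Rightarrow> ('x \<times> real \<times> 'a \<times> real) measure" where
  "sample_law px pt pi0 R =
     (px \<Otimes>\<^sub>M pt) \<bind> (\<lambda>(x, t). actdist (pi0 x t) \<bind>
        (\<lambda>a. distr (R x t a) (px \<Otimes>\<^sub>M borel \<Otimes>\<^sub>M count_space UNIV \<Otimes>\<^sub>M borel) (\<lambda>r. (x, t, a, r))))"

text \<open>p(phi(t')) = \<integral>_0^T p(s) I{phi(s) = phi(t')} ds, i.e. the pt-probability of {s in [0,T]. phi s = phi t'}.\<close>
definition pphi :: "real measure \<Rightarrow> real \<Rightarrow> (real \<Rightarrow> 'l) \<Rightarrow> real \<Rightarrow> real" where
  "pphi pt T \<phi> t' = measure pt {s \<in> {0..T}. \<phi> s = \<phi> t'}"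

text \<open>Per-sample OPFV gradient term (one coordinate of zeta; \<open>piz\<close> = pi_zeta, \<open>s\<close> = score coordinate).\<close>
definition opfv_term ::
  "real measure \<Rightarrow> real \<Rightarrow> (real \<Rightarrow> 'l) \<Rightarrow> real \<Rightarrow> ('x \<Rightarrow> real \<Rightarrow> 'a::finite \<Rightarrow> real)
    \<Rightarrow> ('x \<Rightarrow> real \<Rightarrow> 'a \<Rightarrow> real) \<Rightarrow> ('x \<Rightarrow> real \<Rightarrow> 'a \<Rightarrow> real) \<Rightarrow> ('x \<Rightarrow> real \<Rightarrow> 'a \<Rightarrow> real)
    \<Rightarrow> 'x \<times> real \<times> 'a \<times> real \<Rightarrow> real" where
  "opfv_term pt T \<phi> t' pi0 piz fhat s = (\<lambda>(x, t, a, r).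
     (if \<phi> t = \<phi> t' then 1 else 0) / pphi pt T \<phi> t' * (piz x t' a / pi0 x t a)
       * (r - fhat x t a) * s x t' a
     + aexp (piz x t') (\<lambda>b. fhat x t' b * s x t' b))"

definition opfv_grad ::
  "nat \<Rightarrow> real measure \<Rightarrow> real \<Rightarrow> (real \<Rightarrow> 'l) \<Rightarrow> real \<Rightarrow> ('x \<Rightarrow> real \<Rightarrow> 'a::finite \<Rightarrow> real)
    \<Rightarrow> ('x \<Rightarrow> real \<Rightarrow> 'a \<Rightarrow> real) \<Rightarrow> ('x \<Rightarrow> real \<Rightarrow> 'a \<Rightarrow> real) \<Rightarrow> ('x \<Rightarrow> real \<Rightarrow> 'a \<Rightarrow> real)
    \<Rightarrow> (nat \<Rightarrow> 'x \<times> real \<times> 'a \<times> real) \<Rightarrow> real" where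
  "opfv_grad n pt T \<phi> t' pi0 piz fhat s D =
     (1 / real n) * (\<Sum>i<n. opfv_term pt T \<phi> t' pi0 piz fhat s (D i))"

end

theory Submission
  imports Defs
begin

(* Write Y for one summand of the estimator. The n samples are i.i.d., so
   n Var[grad] = Var[Y]. Conditionally on the context (x, t), Y is affine in the reward r, and the
   hypothesis Delta_q = Delta_fhat on the bin of t' turns its conditional mean into
   w(t) H(x) + G(x), where w(t) = I(phi t = phi t') / p(phi t'), H(x) = E_{pi_zeta}[(q - fhat) s] and
   G(x) = E_{pi_zeta}[fhat s], all evaluated at time t'. The law of total variance splits Var[Y] into
   the expected conditional variance, which gives the reward-noise term and the action-sampling term,
   plus the variance of w(t) H(x) + G(x). Since x and t are independent and E[w] = 1, the latter equals
   Var[w] E[H^2] + Var[H + G], and H + G = E_{pi_zeta}[q s]. *)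

section \<open>Moments and variances\<close>

lemma Var_eq:
  fixes f :: "'b \<Rightarrow> real"
  assumes "prob_space M" "integrable M f" "integrable M (\<lambda>x. (f x)\<^sup>2)"
  shows "Var M f = Ex M (\<lambda>x. (f x)\<^sup>2) - (Ex M f)\<^sup>2"
  using prob_space.variance_eq[OF assms] by (simp add: Var_def Ex_def)

lemma Var_cong_AE:
  fixes f g :: "'b \<Rightarrow> real"
  assumes "f \<in> borel_measurable M" "g \<in> borel_measurable M" "AE x in M. f x = g x"
  shows "Var M f = Var M g"
proof -
  have "Ex M f = Ex M g"
    unfolding Ex_def using assms by (rule integral_cong_AE)
  then show ?thesis
    unfolding Var_def using assms by (intro integral_cong_AE) (auto elim: eventually_mono)
qed

lemma
  fixes X :: "'b \<Rightarrow> real"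
  assumes "prob_space M" "X \<in> borel_measurable M" "integrable M (\<lambda>x. (X x)\<^sup>2)"
  shows Ex_affine: "Ex M (\<lambda>x. c * X x + d) = c * Ex M X + d"
    and Ex_affine_square: "Ex M (\<lambda>x. (c * X x + d)\<^sup>2) = c\<^sup>2 * Var M X + (c * Ex M X + d)\<^sup>2"
proof -
  interpret prob_space M by fact
  have X: "integrable M X"
    using assms(2,3) by (rule square_integrable_imp_integrable)
  then show "Ex M (\<lambda>x. c * X x + d) = c * Ex M X + d"
    by (simp add: Ex_def prob_space)
  have "(c * X x + d)\<^sup>2 = c\<^sup>2 * (X x)\<^sup>2 + 2 * c * d * X x + d\<^sup>2" for x
    by (simp add: power2_eq_square algebra_simps)
  then have "Ex M (\<lambda>x. (c * X x + d)\<^sup>2) = c\<^sup>2 * Ex M (\<lambda>x. (X x)\<^sup>2) + 2 * c * d * Ex M X + d\<^sup>2"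
    using X assms(3) by (simp add: Ex_def prob_space)
  also have "\<dots> = c\<^sup>2 * Var M X + (c * Ex M X + d)\<^sup>2"
    unfolding Var_eq[OF assms(1) X assms(3)] by (simp add: power2_eq_square algebra_simps)
  finally show "Ex M (\<lambda>x. (c * X x + d)\<^sup>2) = c\<^sup>2 * Var M X + (c * Ex M X + d)\<^sup>2" .
qed

lemma
  fixes f g :: "'b \<Rightarrow> real"
  assumes [measurable]: "f \<in> borel_measurable M" "g \<in> borel_measurable M"
    and f2: "integrable M (\<lambda>x. (f x)\<^sup>2)" and g2: "integrable M (\<lambda>x. (g x)\<^sup>2)"
  shows integrable_mult_square_integrable: "integrable M (\<lambda>x. f x * g x)"
    and square_integrable_lincomb: "integrable M (\<lambda>x. (c * f x + d * g x)\<^sup>2)"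
proof -
  have bound: "\<bar>u * v\<bar> \<le> u\<^sup>2 + v\<^sup>2" for u v :: real
  proof -
    have "2 * (\<bar>u\<bar> * \<bar>v\<bar>) \<le> u\<^sup>2 + v\<^sup>2"
      using sum_squares_bound[of "\<bar>u\<bar>" "\<bar>v\<bar>"] by (simp add: mult.assoc)
    moreover have "0 \<le> \<bar>u\<bar> * \<bar>v\<bar>"
      by simp
    ultimately show ?thesis
      unfolding abs_mult by linarith
  qed
  show fg: "integrable M (\<lambda>x. f x * g x)"
  proof (rule Bochner_Integration.integrable_bound[of M "\<lambda>x. (f x)\<^sup>2 + (g x)\<^sup>2"])
    show "integrable M (\<lambda>x. (f x)\<^sup>2 + (g x)\<^sup>2)"
      using f2 g2 by simp
    show "AE x in M. norm (f x * g x) \<le> norm ((f x)\<^sup>2 + (g x)\<^sup>2)"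
      using bound by simp
  qed measurable
  have "(c * f x + d * g x)\<^sup>2 = c\<^sup>2 * (f x)\<^sup>2 + 2 * c * d * (f x * g x) + d\<^sup>2 * (g x)\<^sup>2" for x
    by (simp add: power2_eq_square algebra_simps)
  then show "integrable M (\<lambda>x. (c * f x + d * g x)\<^sup>2)"
    using f2 g2 fg by simp
qed

lemma square_integrable_of_two_affine:
  fixes a b :: "'b \<Rightarrow> real"
  assumes [measurable]: "a \<in> borel_measurable M" "b \<in> borel_measurable M" and "c0 \<noteq> c1"
    and "integrable M (\<lambda>x. (c0 * a x + b x)\<^sup>2)" "integrable M (\<lambda>x. (c1 * a x + b x)\<^sup>2)"
  shows "integrable M (\<lambda>x. (a x)\<^sup>2)" "integrable M (\<lambda>x. (b x)\<^sup>2)"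
proof -
  define f0 where "f0 = (\<lambda>x. c0 * a x + b x)"
  define f1 where "f1 = (\<lambda>x. c1 * a x + b x)"
  define d where "d = c0 - c1"
  have "d \<noteq> 0"
    using \<open>c0 \<noteq> c1\<close> by (simp add: d_def)
  moreover have "f0 x - f1 x = d * a x" "c0 * f1 x - c1 * f0 x = d * b x" for x
    by (simp_all add: f0_def f1_def d_def algebra_simps)
  ultimately have "a x = 1 / d * f0 x + - 1 / d * f1 x" "b x = - c1 / d * f0 x + c0 / d * f1 x" for x
    by (simp_all add: field_simps)
  then have "(\<lambda>x. (a x)\<^sup>2) = (\<lambda>x. (1 / d * f0 x + - 1 / d * f1 x)\<^sup>2)"
    and "(\<lambda>x. (b x)\<^sup>2) = (\<lambda>x. (- c1 / d * f0 x + c0 / d * f1 x)\<^sup>2)"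
    by simp_all
  moreover have "f0 \<in> borel_measurable M" "f1 \<in> borel_measurable M"
    "integrable M (\<lambda>x. (f0 x)\<^sup>2)" "integrable M (\<lambda>x. (f1 x)\<^sup>2)"
    using assms by (simp_all add: f0_def f1_def)
  note lincomb = square_integrable_lincomb[OF this]
  ultimately show "integrable M (\<lambda>x. (a x)\<^sup>2)" "integrable M (\<lambda>x. (b x)\<^sup>2)"
    by (simp_all only: lincomb)
qed

section \<open>Finite expectations over actions\<close>

lemma aexp_add: "aexp p (\<lambda>a. f a + g a) = aexp p f + aexp p g"
  and aexp_cmult: "aexp p (\<lambda>a. c * f a) = c * aexp p f"
  by (simp_all add: aexp_def algebra_simps sum.distrib sum_distrib_left)

lemma aexp_const: "(\<Sum>a\<in>UNIV. p a) = 1 \<Longrightarrow> aexp p (\<lambda>_. c) = c"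
  by (simp add: aexp_def flip: sum_distrib_right)

lemma aexp_affine:
  assumes "(\<Sum>a\<in>UNIV. p a) = 1"
  shows "aexp p (\<lambda>a. c * g a + d) = c * aexp p g + d"
  by (simp only: aexp_add aexp_cmult aexp_const[OF assms])

lemma avar_eq:
  assumes p: "(\<Sum>a\<in>UNIV. p a) = 1"
  shows "avar p g = aexp p (\<lambda>a. (g a)\<^sup>2) - (aexp p g)\<^sup>2"
proof -
  have "avar p g = aexp p (\<lambda>a. (g a)\<^sup>2 + - 2 * aexp p g * g a + (aexp p g)\<^sup>2)"
    by (simp add: avar_def aexp_def power2_eq_square algebra_simps)
  also have "\<dots> = aexp p (\<lambda>a. (g a)\<^sup>2) - (aexp p g)\<^sup>2"
    by (simp only: aexp_add aexp_cmult aexp_const[OF p]) (simp add: power2_eq_square)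
  finally show ?thesis .
qed

lemma avar_nonneg: "(\<And>a. 0 \<le> p a) \<Longrightarrow> 0 \<le> avar p g"
  by (simp add: avar_def sum_nonneg)

lemma aexp_affine_square:
  assumes p: "(\<Sum>a\<in>UNIV. p a) = 1"
  shows "aexp p (\<lambda>a. (c * g a + d)\<^sup>2) = c\<^sup>2 * avar p g + (c * aexp p g + d)\<^sup>2"
proof -
  have "aexp p (\<lambda>a. (c * g a + d)\<^sup>2) = aexp p (\<lambda>a. c\<^sup>2 * (g a)\<^sup>2 + 2 * c * d * g a + d\<^sup>2)"
    by (simp add: power2_eq_square algebra_simps)
  also have "\<dots> = c\<^sup>2 * aexp p (\<lambda>a. (g a)\<^sup>2) + 2 * c * d * aexp p g + d\<^sup>2"
    by (simp only: aexp_add aexp_cmult aexp_const[OF p])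
  also have "\<dots> = c\<^sup>2 * avar p g + (c * aexp p g + d)\<^sup>2"
    unfolding avar_eq[OF p] by (simp add: power2_eq_square algebra_simps)
  finally show ?thesis .
qed

section \<open>Sample means of i.i.d. copies\<close>

lemma
  fixes f :: "'b \<Rightarrow> real"
  assumes M: "\<And>i. i \<in> I \<Longrightarrow> prob_space (M i)" and i: "i \<in> I"
    and f: "f \<in> borel_measurable (M i)"
  shows integrable_PiM_component: "integrable (PiM I M) (\<lambda>D. f (D i)) \<longleftrightarrow> integrable (M i) f"
    and integral_PiM_component: "(\<integral>D. f (D i) \<partial>PiM I M) = integral\<^sup>L (M i) f"
proof -
  have comp: "(\<lambda>D. D i) \<in> PiM I M \<rightarrow>\<^sub>M M i"
    using i by (rule measurable_component_singleton)
  note component = distr_PiM_component[of I M i, OF M i]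
  show "integrable (PiM I M) (\<lambda>D. f (D i)) \<longleftrightarrow> integrable (M i) f"
    using integrable_distr_eq[OF comp f] by (simp add: component)
  show "(\<integral>D. f (D i) \<partial>PiM I M) = integral\<^sup>L (M i) f"
    using integral_distr[OF comp f] by (simp add: component)
qed

lemma
  fixes f g :: "'b \<Rightarrow> real"
  assumes M: "\<And>i. prob_space (M i)" and I: "finite I" "i \<in> I" "j \<in> I" "i \<noteq> j"
    and f: "integrable (M i) f" and g: "integrable (M j) g"
  shows integrable_PiM_two_components: "integrable (PiM I M) (\<lambda>D. f (D i) * g (D j))"
    and integral_PiM_two_components:
      "(\<integral>D. f (D i) * g (D j) \<partial>PiM I M) = integral\<^sup>L (M i) f * integral\<^sup>L (M j) g"
proof -
  interpret product_sigma_finite M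
    using M by (simp add: product_sigma_finite_def prob_space_imp_sigma_finite)
  define F where "F k = (if k = i then f else if k = j then g else (\<lambda>_. 1))" for k
  have "integrable (M k) (\<lambda>_. 1 :: real)" for k
    using M by (intro finite_measure.integrable_const prob_space.finite_measure)
  then have F: "integrable (M k) (F k)" for k
    using f g by (simp add: F_def)
  have "(\<Prod>k\<in>I. F k (D k)) = (\<Prod>k\<in>I. (if k = i then f (D k) else 1) * (if k = j then g (D k) else 1))" for D
    using I(4) by (intro prod.cong) (auto simp: F_def)
  moreover have "(\<Prod>k\<in>I. integral\<^sup>L (M k) (F k))
      = (\<Prod>k\<in>I. (if k = i then integral\<^sup>L (M k) f else 1) * (if k = j then integral\<^sup>L (M k) g else 1))"
    using I(4) M by (intro prod.cong) (auto simp: F_def prob_space.prob_space)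
  ultimately show "integrable (PiM I M) (\<lambda>D. f (D i) * g (D j))"
    and "(\<integral>D. f (D i) * g (D j) \<partial>PiM I M) = integral\<^sup>L (M i) f * integral\<^sup>L (M j) g"
    using product_integrable_prod[OF I(1) F] product_integral_prod[OF I(1) F] I
    by (simp_all add: prod.distrib)
qed

lemma
  fixes Z :: "'b \<Rightarrow> real"
  assumes M: "prob_space M" and Z[measurable]: "Z \<in> borel_measurable M"
    and Z2: "integrable M (\<lambda>x. (Z x)\<^sup>2)" and mean_zero: "integral\<^sup>L M Z = 0"
    and I: "finite I" "i \<in> I" "j \<in> I"
  shows integrable_PiM_centered_products: "integrable (PiM I (\<lambda>_. M)) (\<lambda>D. Z (D i) * Z (D j))"
    and integral_PiM_centered_products:
      "(\<integral>D. Z (D i) * Z (D j) \<partial>PiM I (\<lambda>_. M)) = (if i = j then integral\<^sup>L M (\<lambda>x. (Z x)\<^sup>2) else 0)"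
proof -
  have Z1: "integrable M Z"
    using Z Z2 by (rule finite_measure.square_integrable_imp_integrable[OF prob_space.finite_measure[OF M]])
  note diagonal = integral_PiM_component[of I "\<lambda>_. M" i "\<lambda>x. (Z x)\<^sup>2"]
    integrable_PiM_component[of I "\<lambda>_. M" i "\<lambda>x. (Z x)\<^sup>2"]
  note off_diagonal = integral_PiM_two_components[OF M I(1-3) _ Z1 Z1]
    integrable_PiM_two_components[OF M I(1-3) _ Z1 Z1]
  show "integrable (PiM I (\<lambda>_. M)) (\<lambda>D. Z (D i) * Z (D j))"
    "(\<integral>D. Z (D i) * Z (D j) \<partial>PiM I (\<lambda>_. M)) = (if i = j then integral\<^sup>L M (\<lambda>x. (Z x)\<^sup>2) else 0)"
    using I Z2 diagonal off_diagonal by (auto simp: M mean_zero power2_eq_square)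
qed

lemma variance_sample_mean_iid:
  fixes Y :: "'b \<Rightarrow> real"
  assumes M: "prob_space M" and Y[measurable]: "Y \<in> borel_measurable M"
    and Y2: "integrable M (\<lambda>x. (Y x)\<^sup>2)" and n: "n > 0"
  shows "real n * Var (PiM {..<n} (\<lambda>_. M)) (\<lambda>D. 1 / real n * (\<Sum>i<n. Y (D i))) = Var M Y"
proof -
  interpret prob_space M by (rule M)
  let ?P = "PiM {..<n} (\<lambda>_. M)"
  define Z where "Z = (\<lambda>x. Y x - Ex M Y)"
  have Y1: "integrable M Y"
    using Y Y2 by (rule square_integrable_imp_integrable)
  have [measurable]: "Z \<in> borel_measurable M" and "integrable M (\<lambda>x. (Z x)\<^sup>2)" "integral\<^sup>L M Z = 0"
    using Y1 Y2 by (simp_all add: Z_def power2_diff Ex_def prob_space)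
  note products = integrable_PiM_centered_products[OF M this finite_lessThan]
    integral_PiM_centered_products[OF M this finite_lessThan]
  have "(\<integral>D. Y (D i) \<partial>?P) = Ex M Y" "integrable ?P (\<lambda>D. Y (D i))" if "i < n" for i
    using that Y1 integral_PiM_component[of "{..<n}" "\<lambda>_. M" i Y]
      integrable_PiM_component[of "{..<n}" "\<lambda>_. M" i Y]
    by (simp_all add: M Ex_def)
  then have mean: "Ex ?P (\<lambda>D. 1 / real n * (\<Sum>i<n. Y (D i))) = Ex M Y"
    using n by (simp add: Ex_def Bochner_Integration.integral_sum)
  have square: "(1 / real n * (\<Sum>i<n. Y (D i)) - Ex M Y)\<^sup>2
      = (1 / real n)\<^sup>2 * (\<Sum>i<n. \<Sum>j<n. Z (D i) * Z (D j))" for D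
  proof -
    have "1 / real n * (\<Sum>i<n. Y (D i)) - Ex M Y = 1 / real n * (\<Sum>i<n. Z (D i))"
      using n by (simp add: Z_def sum_subtractf field_simps)
    then show ?thesis
      by (simp add: power_mult_distrib power2_eq_square sum_product)
  qed
  have "Var ?P (\<lambda>D. 1 / real n * (\<Sum>i<n. Y (D i)))
      = (1 / real n)\<^sup>2 * (\<integral>D. (\<Sum>i<n. \<Sum>j<n. Z (D i) * Z (D j)) \<partial>?P)"
    unfolding Var_def mean square by simp
  also have "\<dots> = (1 / real n)\<^sup>2 * (\<Sum>i<n. \<Sum>j<n. \<integral>D. Z (D i) * Z (D j) \<partial>?P)"
    using products(1) by (subst Bochner_Integration.integral_sum)
      (auto intro!: Bochner_Integration.integrable_sum sum.cong Bochner_Integration.integral_sum)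
  also have "\<dots> = Var M Y / real n"
    using n products(2) by (simp add: Var_def Z_def power2_eq_square)
  finally show ?thesis
    using n by simp
qed

section \<open>Integrals against kernels\<close>

lemma
  fixes f :: "_ \<Rightarrow> real"
  assumes N[measurable]: "N \<in> M \<rightarrow>\<^sub>M subprob_algebra K"
    and f[measurable]: "f \<in> borel_measurable K" and nonneg: "\<And>y. 0 \<le> f y"
    and int: "integrable (M \<bind> N) f"
  shows AE_integrable_bind_kernel_nonneg: "AE x in M. integrable (N x) f"
    and integrable_kernel_integral_bind_integrable_nonneg: "integrable M (\<lambda>x. integral\<^sup>L (N x) f)"
    and integral_bind_integrable_nonneg: "integral\<^sup>L (M \<bind> N) f = (\<integral>x. integral\<^sup>L (N x) f \<partial>M)"
proof -
  have f_N: "f \<in> borel_measurable (N x)" if "x \<in> space M" for x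
    using sets_kernel[OF N that] by (simp cong: measurable_cong_sets)
  have inner_meas: "(\<lambda>x. integral\<^sup>L (N x) f) \<in> borel_measurable M"
    by (rule measurable_compose[OF N integral_measurable_subprob_algebra]) measurable
  have inner_nn_meas: "(\<lambda>x. \<integral>\<^sup>+y. f y \<partial>N x) \<in> borel_measurable M"
    by (rule measurable_compose[OF N nn_integral_measurable_subprob_algebra]) measurable
  have bind: "(\<integral>\<^sup>+y. f y \<partial>(M \<bind> N)) = (\<integral>\<^sup>+x. \<integral>\<^sup>+y. f y \<partial>N x \<partial>M)"
    by (rule nn_integral_bind[OF _ N]) measurable
  have finite: "(\<integral>\<^sup>+x. \<integral>\<^sup>+y. f y \<partial>N x \<partial>M) < \<infinity>"
    using int nonneg by (simp add: integrable_iff_bounded bind[symmetric])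
  have "AE x in M. (\<integral>\<^sup>+y. f y \<partial>N x) \<noteq> \<infinity>"
    using finite inner_nn_meas by (intro nn_integral_PInf_AE) auto
  then show AE_int: "AE x in M. integrable (N x) f"
    using nonneg by (auto simp: integrable_iff_bounded less_top f_N)
  have "(\<integral>\<^sup>+x. integral\<^sup>L (N x) f \<partial>M) = (\<integral>\<^sup>+x. \<integral>\<^sup>+y. f y \<partial>N x \<partial>M)"
    using AE_int by (intro nn_integral_cong_AE) (auto simp: nonneg nn_integral_eq_integral)
  then show "integrable M (\<lambda>x. integral\<^sup>L (N x) f)"
    using finite inner_meas nonneg by (simp add: integrable_iff_bounded integral_nonneg)
  have "integral\<^sup>L (M \<bind> N) f = enn2real (\<integral>\<^sup>+x. \<integral>\<^sup>+y. f y \<partial>N x \<partial>M)"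
    using borel_measurable_integrable[OF int] nonneg by (simp add: integral_eq_nn_integral bind)
  also have "\<dots> = enn2real (\<integral>\<^sup>+x. integral\<^sup>L (N x) f \<partial>M)"
    using \<open>(\<integral>\<^sup>+x. integral\<^sup>L (N x) f \<partial>M) = _\<close> by simp
  also have "\<dots> = (\<integral>x. integral\<^sup>L (N x) f \<partial>M)"
    using inner_meas nonneg by (simp add: integral_eq_nn_integral integral_nonneg)
  finally show "integral\<^sup>L (M \<bind> N) f = (\<integral>x. integral\<^sup>L (N x) f \<partial>M)" .
qed

lemma
  fixes f :: "_ \<Rightarrow> real"
  assumes N[measurable]: "N \<in> M \<rightarrow>\<^sub>M subprob_algebra K"
    and f[measurable]: "f \<in> borel_measurable K" and int: "integrable (M \<bind> N) f"
  shows AE_integrable_bind_kernel: "AE x in M. integrable (N x) f"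
    and integrable_kernel_integral_bind: "integrable M (\<lambda>x. integral\<^sup>L (N x) f)"
    and integral_bind_integrable: "integral\<^sup>L (M \<bind> N) f = (\<integral>x. integral\<^sup>L (N x) f \<partial>M)"
proof -
  define pos where "pos = (\<lambda>y. max (f y) 0)"
  define neg where "neg = (\<lambda>y. max (- f y) 0)"
  have f_eq: "f = (\<lambda>y. pos y - neg y)"
    by (auto simp: pos_def neg_def)
  have nonneg: "0 \<le> pos y" "0 \<le> neg y" for y
    by (simp_all add: pos_def neg_def)
  have "pos \<in> borel_measurable K" "neg \<in> borel_measurable K"
    "integrable (M \<bind> N) pos" "integrable (M \<bind> N) neg"
    using int by (auto simp: pos_def neg_def)
  note P = AE_integrable_bind_kernel_nonneg[OF N this(1) nonneg(1) this(3)]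
      integrable_kernel_integral_bind_integrable_nonneg[OF N this(1) nonneg(1) this(3)]
      integral_bind_integrable_nonneg[OF N this(1) nonneg(1) this(3)]
    and Q = AE_integrable_bind_kernel_nonneg[OF N this(2) nonneg(2) this(4)]
      integrable_kernel_integral_bind_integrable_nonneg[OF N this(2) nonneg(2) this(4)]
      integral_bind_integrable_nonneg[OF N this(2) nonneg(2) this(4)]
  show AE_int: "AE x in M. integrable (N x) f"
    using P(1) Q(1) unfolding f_eq by eventually_elim auto
  have inner: "AE x in M. integral\<^sup>L (N x) f = integral\<^sup>L (N x) pos - integral\<^sup>L (N x) neg"
    using P(1) Q(1) unfolding f_eq by eventually_elim auto
  have inner_meas: "(\<lambda>x. integral\<^sup>L (N x) f) \<in> borel_measurable M"
    by (rule measurable_compose[OF N integral_measurable_subprob_algebra]) measurable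
  show "integrable M (\<lambda>x. integral\<^sup>L (N x) f)"
    using P(2) Q(2) nonneg by (subst integrable_cong_AE[OF inner_meas _ inner]) auto
  have "integral\<^sup>L (M \<bind> N) f = integral\<^sup>L (M \<bind> N) pos - integral\<^sup>L (M \<bind> N) neg"
    using \<open>integrable (M \<bind> N) pos\<close> \<open>integrable (M \<bind> N) neg\<close> by (simp add: f_eq)
  also have "\<dots> = (\<integral>x. integral\<^sup>L (N x) pos - integral\<^sup>L (N x) neg \<partial>M)"
    using P(2,3) Q(2,3) nonneg by simp
  also have "\<dots> = (\<integral>x. integral\<^sup>L (N x) f \<partial>M)"
    using P(2) Q(2) inner by (intro integral_cong_AE[OF _ inner_meas]) (auto elim: eventually_mono)
  finally show "integral\<^sup>L (M \<bind> N) f = (\<integral>x. integral\<^sup>L (N x) f \<partial>M)" .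
qed

lemma bind_cong_AE_partial_kernel:
  assumes f_emeasure: "\<And>A. A \<in> sets N \<Longrightarrow> (\<lambda>z. emeasure (f z) A) \<in> borel_measurable M"
    and f_sets: "\<And>z. z \<in> space M \<Longrightarrow> sets (f z) = sets N"
    and N: "space N \<noteq> {}"
    and g: "g \<in> M \<rightarrow>\<^sub>M subprob_algebra N"
    and ae: "AE z in M. f z = g z"
  shows "M \<bind> f = M \<bind> g"
proof (cases "space M = {}")
  case False
  define S where "S = {z \<in> space M. emeasure (f z) (space N) \<le> 1}"
  have S: "S \<in> sets M"
    using f_emeasure[OF sets.top] unfolding S_def by measurable
  have space_f: "space (f z) = space N" if "z \<in> space M" for z
    using f_sets[OF that] by (rule sets_eq_imp_space_eq)
  have f_S: "f \<in> restrict_space M S \<rightarrow>\<^sub>M subprob_algebra N"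
  proof (rule measurable_subprob_algebra)
    fix z assume "z \<in> space (restrict_space M S)"
    then have z: "z \<in> space M" "emeasure (f z) (space N) \<le> 1"
      by (auto simp: space_restrict_space S_def)
    show "subprob_space (f z)"
      using z N by (intro subprob_spaceI) (auto simp: space_f)
    show "sets (f z) = sets N"
      using z(1) by (rule f_sets)
  qed (use f_emeasure in \<open>auto intro: measurable_restrict_space1\<close>)
  have f_preimage: "f -` A \<inter> space M \<in> sets M" if "A \<in> sets (subprob_algebra N)" for A
  proof -
    have "z \<in> S" if "z \<in> space M" "f z \<in> A" for z
    proof -
      have "subprob_space (f z)"
        using sets.sets_into_space[OF \<open>A \<in> _\<close>] that(2) by (auto simp: space_subprob_algebra)
      then show ?thesis
        using that(1) subprob_space.emeasure_space_le_1[of "f z"] by (simp add: S_def space_f)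
    qed
    then have "f -` A \<inter> space M = f -` A \<inter> space (restrict_space M S)"
      unfolding space_restrict_space S_def by blast
    also have "\<dots> \<in> sets (restrict_space M S)"
      using f_S that by (rule measurable_sets)
    finally show ?thesis
      using S by (simp add: sets_restrict_space_iff)
  qed
  have "distr M (subprob_algebra N) f = distr M (subprob_algebra N) g"
    unfolding distr_def
  proof (rule measure_of_eq[OF sets.space_closed])
    fix A assume "A \<in> sigma_sets (space (subprob_algebra N)) (sets (subprob_algebra N))"
    then have A: "A \<in> sets (subprob_algebra N)"
      by (simp add: sets.sigma_sets_eq)
    show "emeasure M (f -` A \<inter> space M) = emeasure M (g -` A \<inter> space M)"
      using ae by (intro emeasure_eq_AE f_preimage A measurable_sets[OF g A]) auto
  qed
  moreover define z0 where "z0 = (SOME z. z \<in> space M)"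
  then have "z0 \<in> space M"
    using False by (simp add: some_in_eq)
  then have "subprob_algebra (f z0) = subprob_algebra N" "subprob_algebra (g z0) = subprob_algebra N"
    by (auto intro!: subprob_algebra_cong f_sets sets_kernel[OF g])
  ultimately show ?thesis
    using False by (simp add: bind_def z0_def[symmetric])
qed (simp add: bind_empty)

lemma variance_bind:
  fixes Y :: "'b \<Rightarrow> real"
  assumes M: "prob_space M" and K[measurable]: "K \<in> M \<rightarrow>\<^sub>M subprob_algebra N"
    and K_prob: "\<And>z. z \<in> space M \<Longrightarrow> prob_space (K z)"
    and Y[measurable]: "Y \<in> borel_measurable N" and Y2: "integrable (M \<bind> K) (\<lambda>\<omega>. (Y \<omega>)\<^sup>2)"
    and \<mu>[measurable]: "\<mu> \<in> borel_measurable M" and v[measurable]: "v \<in> borel_measurable M"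
    and mean: "AE z in M. integral\<^sup>L (K z) Y = \<mu> z"
    and second_moment: "AE z in M. integral\<^sup>L (K z) (\<lambda>\<omega>. (Y \<omega>)\<^sup>2) = v z + (\<mu> z)\<^sup>2"
  shows "Var (M \<bind> K) Y = Ex M v + Var M \<mu>"
    and "integrable M v" and "integrable M (\<lambda>z. (\<mu> z)\<^sup>2)"
proof -
  interpret M: prob_space M by (rule M)
  have bind_prob: "prob_space (M \<bind> K)"
    by (rule M.prob_space_bind[OF AE_I2[OF K_prob] K])
  have "space (M \<bind> K) = space N"
    using M.not_empty by (intro space_bind_measurable[OF K])
  then have Y1: "integrable (M \<bind> K) Y"
    using finite_measure.square_integrable_imp_integrable[OF prob_space.finite_measure[OF bind_prob] _ Y2]
    by (simp add: measurable_cong_sets[OF sets_bind_measurable[OF K M.not_empty] refl])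
  have Y2_meas: "(\<lambda>\<omega>. (Y \<omega>)\<^sup>2) \<in> borel_measurable N"
    by measurable
  note first = AE_integrable_bind_kernel[OF K Y Y1] integrable_kernel_integral_bind[OF K Y Y1]
    integral_bind_integrable[OF K Y Y1]
  note second = integrable_kernel_integral_bind[OF K Y2_meas Y2] integral_bind_integrable[OF K Y2_meas Y2]
  have v_nonneg: "AE z in M. 0 \<le> v z"
    using first(1) AE_integrable_bind_kernel[OF K Y2_meas Y2] mean second_moment AE_space
  proof eventually_elim
    case (elim z)
    then have "v z = Var (K z) Y"
      using Var_eq[OF K_prob] by (simp add: Ex_def)
    then show ?case
      by (simp add: Var_def)
  qed
  have \<mu>_int: "integrable M \<mu>"
    using first(2) \<mu> mean by (rule integrable_cong_AE_imp)
  have v\<mu>_int: "integrable M (\<lambda>z. v z + (\<mu> z)\<^sup>2)"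
    using second(1) _ second_moment by (rule integrable_cong_AE_imp) measurable
  show \<mu>2_int: "integrable M (\<lambda>z. (\<mu> z)\<^sup>2)"
  proof (rule Bochner_Integration.integrable_bound[OF v\<mu>_int])
    show "AE z in M. norm ((\<mu> z)\<^sup>2) \<le> norm (v z + (\<mu> z)\<^sup>2)"
      using v_nonneg by eventually_elim simp
  qed measurable
  show v_int: "integrable M v"
    using Bochner_Integration.integrable_diff[OF v\<mu>_int \<mu>2_int] by simp
  have "Ex (M \<bind> K) Y = Ex M \<mu>"
    using first(3) integral_cong_AE[OF borel_measurable_integrable[OF first(2)] \<mu> mean]
    by (simp add: Ex_def)
  moreover have "Ex (M \<bind> K) (\<lambda>\<omega>. (Y \<omega>)\<^sup>2) = Ex M v + Ex M (\<lambda>z. (\<mu> z)\<^sup>2)"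
    using second(2) integral_cong_AE[OF borel_measurable_integrable[OF second(1)] _ second_moment]
      v_int \<mu>2_int by (simp add: Ex_def)
  ultimately show "Var (M \<bind> K) Y = Ex M v + Var M \<mu>"
    using Var_eq[OF bind_prob Y1 Y2] Var_eq[OF M \<mu>_int \<mu>2_int] by simp
qed

section \<open>Finite mixtures of kernels\<close>

lemma sets_actdist[simp, measurable_cong]: "sets (actdist w) = sets (count_space UNIV)"
  and space_actdist[simp]: "space (actdist w) = UNIV"
  by (simp_all add: actdist_def)

context
  fixes L :: "'a::finite \<Rightarrow> 'b measure" and N :: "'b measure"
  assumes L: "\<And>a. L a \<in> space (subprob_algebra N)"
begin

lemma measurable_actdist_kernel: "L \<in> actdist w \<rightarrow>\<^sub>M subprob_algebra N"
  using L by (simp add: measurable_cong_sets[OF sets_actdist refl])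

lemma sets_mixture: "sets (actdist w \<bind> L) = sets N"
  by (rule sets_bind_measurable[OF measurable_actdist_kernel]) simp

lemma emeasure_mixture:
  assumes "X \<in> sets N"
  shows "emeasure (actdist w \<bind> L) X = (\<Sum>a\<in>UNIV. ennreal (w a) * emeasure (L a) X)"
  using emeasure_bind[OF _ measurable_actdist_kernel assms]
  by (simp add: actdist_def nn_integral_density nn_integral_count_space_finite)

lemma integral_mixture:
  fixes f :: "'b \<Rightarrow> real"
  assumes w: "\<And>a. 0 \<le> w a" and f: "f \<in> borel_measurable N"
    and int: "integrable (actdist w \<bind> L) f"
  shows "integral\<^sup>L (actdist w \<bind> L) f = (\<Sum>a\<in>UNIV. w a * integral\<^sup>L (L a) f)"
  using integral_bind_integrable[OF measurable_actdist_kernel f int]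
  by (simp add: actdist_def integral_density w lebesgue_integral_count_space_finite)

lemma prob_space_mixture:
  assumes w: "\<And>a. 0 \<le> w a" "(\<Sum>a\<in>UNIV. w a) = 1" and prob: "\<And>a. prob_space (L a)"
  shows "prob_space (actdist w \<bind> L)"
proof (rule prob_spaceI)
  have "space (actdist w \<bind> L) = space N"
    using sets_mixture by (rule sets_eq_imp_space_eq)
  moreover have "emeasure (L a) (space N) = 1" for a
  proof -
    have "space (L a) = space N"
      using L[of a] by (intro sets_eq_imp_space_eq) (simp add: space_subprob_algebra)
    then show ?thesis
      using prob_space.emeasure_space_1[OF prob] by metis
  qed
  ultimately show "emeasure (actdist w \<bind> L) (space (actdist w \<bind> L)) = 1"
    using w by (simp add: emeasure_mixture sum_ennreal)
qed

end

lemma measurable_emeasure_mixture: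
  assumes w: "\<And>a. (\<lambda>z. w z a) \<in> borel_measurable M"
    and L: "\<And>a. (\<lambda>z. L z a) \<in> M \<rightarrow>\<^sub>M subprob_algebra N" and X: "X \<in> sets N"
  shows "(\<lambda>z. emeasure (actdist (w z) \<bind> L z) X) \<in> borel_measurable M"
proof -
  have "(\<lambda>z. \<Sum>a\<in>UNIV. ennreal (w z a) * emeasure (L z a) X) \<in> borel_measurable M"
    using w measurable_compose[OF L measurable_emeasure_subprob_algebra[OF X]] by measurable
  then show ?thesis
    by (rule measurable_cong[THEN iffD1, rotated])
      (simp add: emeasure_mixture[OF measurable_space[OF L] X])
qed

lemma measurable_mixture:
  assumes w: "\<And>a. (\<lambda>z. w z a) \<in> borel_measurable M"
    and w_distr: "\<And>z a. z \<in> space M \<Longrightarrow> 0 \<le> w z a" "\<And>z. z \<in> space M \<Longrightarrow> (\<Sum>a\<in>UNIV. w z a) = 1"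
    and L: "\<And>a. (\<lambda>z. L z a) \<in> M \<rightarrow>\<^sub>M subprob_algebra N"
    and prob: "\<And>z a. z \<in> space M \<Longrightarrow> prob_space (L z a)"
  shows "(\<lambda>z. actdist (w z) \<bind> L z) \<in> M \<rightarrow>\<^sub>M subprob_algebra N"
proof (rule measurable_subprob_algebra)
  fix z assume z: "z \<in> space M"
  have L_z: "L z a \<in> space (subprob_algebra N)" for a
    using measurable_space[OF L z] .
  show "subprob_space (actdist (w z) \<bind> L z)"
    using prob_space_mixture[OF L_z w_distr[OF z] prob[OF z]] by (rule prob_space_imp_subprob_space)
  show "sets (actdist (w z) \<bind> L z) = sets N"
    using L_z by (rule sets_mixture)
qed (rule measurable_emeasure_mixture[OF w L])

section \<open>Independent products\<close>

lemma (in pair_sigma_finite) AE_integrable_snd':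
  fixes f :: "_ \<Rightarrow> real"
  assumes "integrable (M1 \<Otimes>\<^sub>M M2) f"
  shows "AE y in M2. integrable M1 (\<lambda>x. f (x, y))"
proof -
  interpret swapped: pair_sigma_finite M2 M1 ..
  show ?thesis
    using swapped.AE_integrable_fst'[OF integrable_product_swap[OF assms]] by simp
qed

lemma (in pair_sigma_finite)
  fixes f :: "'a \<Rightarrow> real" and g :: "'b \<Rightarrow> real"
  assumes f: "integrable M1 f" and g: "integrable M2 g"
  shows integrable_product_mult: "integrable (M1 \<Otimes>\<^sub>M M2) (\<lambda>z. f (fst z) * g (snd z))"
    and integral_product_mult:
      "(\<integral>z. f (fst z) * g (snd z) \<partial>(M1 \<Otimes>\<^sub>M M2)) = integral\<^sup>L M1 f * integral\<^sup>L M2 g"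
proof -
  have [measurable]: "f \<in> borel_measurable M1" "g \<in> borel_measurable M2"
    using f g by auto
  have "(\<integral>\<^sup>+z. norm (f (fst z) * g (snd z)) \<partial>(M1 \<Otimes>\<^sub>M M2))
      = (\<integral>\<^sup>+x. norm (f x) \<partial>M1) * (\<integral>\<^sup>+y. norm (g y) \<partial>M2)"
    by (subst M2.nn_integral_fst[symmetric])
      (auto simp: abs_mult ennreal_mult nn_integral_cmult nn_integral_multc)
  also have "\<dots> < \<infinity>"
    using f g by (simp add: integrable_iff_bounded ennreal_mult_less_top)
  finally show int: "integrable (M1 \<Otimes>\<^sub>M M2) (\<lambda>z. f (fst z) * g (snd z))"
    by (simp add: integrable_iff_bounded)
  show "(\<integral>z. f (fst z) * g (snd z) \<partial>(M1 \<Otimes>\<^sub>M M2)) = integral\<^sup>L M1 f * integral\<^sup>L M2 g"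
    using integral_fst'[OF int] by simp
qed

lemma (in pair_prob_space)
  fixes h :: "'a \<Rightarrow> real"
  assumes h: "h \<in> borel_measurable M1"
  shows integrable_pair_fst_iff: "integrable (M1 \<Otimes>\<^sub>M M2) (\<lambda>z. h (fst z)) \<longleftrightarrow> integrable M1 h"
    and integral_pair_fst: "(\<integral>z. h (fst z) \<partial>(M1 \<Otimes>\<^sub>M M2)) = integral\<^sup>L M1 h"
proof -
  have fst: "fst \<in> M1 \<Otimes>\<^sub>M M2 \<rightarrow>\<^sub>M M1"
    by simp
  show "integrable (M1 \<Otimes>\<^sub>M M2) (\<lambda>z. h (fst z)) \<longleftrightarrow> integrable M1 h"
    "(\<integral>z. h (fst z) \<partial>(M1 \<Otimes>\<^sub>M M2)) = integral\<^sup>L M1 h"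
    using integrable_distr_eq[OF fst h] integral_distr[OF fst h] by (simp_all add: M2.distr_pair_fst)
qed

lemma (in pair_prob_space) variance_pair_scaled_plus_square_integrable:
  fixes a b :: "'a \<Rightarrow> real" and w :: "'b \<Rightarrow> real"
  assumes [measurable]: "a \<in> borel_measurable M1" "b \<in> borel_measurable M1" "w \<in> borel_measurable M2"
    and a2: "integrable M1 (\<lambda>x. (a x)\<^sup>2)" and b2: "integrable M1 (\<lambda>x. (b x)\<^sup>2)"
    and w2: "integrable M2 (\<lambda>t. (w t)\<^sup>2)" and w_mean: "Ex M2 w = 1"
  shows "Var (M1 \<Otimes>\<^sub>M M2) (\<lambda>z. w (snd z) * a (fst z) + b (fst z))
       = Var M2 w * Ex M1 (\<lambda>x. (a x)\<^sup>2) + Var M1 (\<lambda>x. a x + b x)"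
proof -
  have a: "integrable M1 a" and b: "integrable M1 b" and w: "integrable M2 w"
    and ab: "integrable M1 (\<lambda>x. a x * b x)"
    using a2 b2 w2 by (auto intro: M1.square_integrable_imp_integrable M2.square_integrable_imp_integrable
        integrable_mult_square_integrable)
  have ab2: "integrable M1 (\<lambda>x. (a x + b x)\<^sup>2)"
    using square_integrable_lincomb[OF _ _ a2 b2, of 1 1] by simp
  have square: "(w (snd z) * a (fst z) + b (fst z))\<^sup>2
      = (a (fst z))\<^sup>2 * (w (snd z))\<^sup>2 + 2 * (a (fst z) * b (fst z) * w (snd z)) + (b (fst z))\<^sup>2" for z
    by (simp add: power2_eq_square algebra_simps)
  note prod = integrable_product_mult integral_product_mult
  note fst = integrable_pair_fst_iff integral_pair_fst
  have first: "integrable (M1 \<Otimes>\<^sub>M M2) (\<lambda>z. w (snd z) * a (fst z) + b (fst z))"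
    "Ex (M1 \<Otimes>\<^sub>M M2) (\<lambda>z. w (snd z) * a (fst z) + b (fst z)) = Ex M1 a + Ex M1 b"
    using prod[OF a w] fst[of b] b w_mean by (simp_all add: Ex_def mult.commute)
  have second: "integrable (M1 \<Otimes>\<^sub>M M2) (\<lambda>z. (w (snd z) * a (fst z) + b (fst z))\<^sup>2)"
    "Ex (M1 \<Otimes>\<^sub>M M2) (\<lambda>z. (w (snd z) * a (fst z) + b (fst z))\<^sup>2)
      = Ex M1 (\<lambda>x. (a x)\<^sup>2) * Ex M2 (\<lambda>t. (w t)\<^sup>2) + 2 * Ex M1 (\<lambda>x. a x * b x) + Ex M1 (\<lambda>x. (b x)\<^sup>2)"
    unfolding square using prod[OF a2 w2] prod[OF ab w] fst[of "\<lambda>x. (b x)\<^sup>2"] b2 w_mean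
    by (simp_all add: Ex_def)
  have "(\<lambda>x. (a x + b x)\<^sup>2) = (\<lambda>x. (a x)\<^sup>2 + 2 * (a x * b x) + (b x)\<^sup>2)"
    by (simp add: fun_eq_iff power2_eq_square algebra_simps)
  then have var_sum: "Var M1 (\<lambda>x. a x + b x)
      = Ex M1 (\<lambda>x. (a x)\<^sup>2) + 2 * Ex M1 (\<lambda>x. a x * b x) + Ex M1 (\<lambda>x. (b x)\<^sup>2) - (Ex M1 a + Ex M1 b)\<^sup>2"
    using Var_eq[OF M1.prob_space_axioms _ ab2] a b a2 b2 ab by (simp add: Ex_def)
  have w_second: "Ex M2 (\<lambda>t. (w t)\<^sup>2) = Var M2 w + 1"
    using Var_eq[OF M2.prob_space_axioms w w2] w_mean by simp
  have "Var (M1 \<Otimes>\<^sub>M M2) (\<lambda>z. w (snd z) * a (fst z) + b (fst z))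
      = Ex M1 (\<lambda>x. (a x)\<^sup>2) * (Var M2 w + 1) + 2 * Ex M1 (\<lambda>x. a x * b x) + Ex M1 (\<lambda>x. (b x)\<^sup>2)
        - (Ex M1 a + Ex M1 b)\<^sup>2"
    unfolding Var_eq[OF prob_space_axioms first(1) second(1)] first(2) second(2) w_second ..
  also have "\<dots> = Var M2 w * Ex M1 (\<lambda>x. (a x)\<^sup>2) + Var M1 (\<lambda>x. a x + b x)"
    unfolding var_sum by (simp add: algebra_simps)
  finally show ?thesis .
qed

lemma (in pair_prob_space) Var_pair_fst:
  fixes h :: "'a \<Rightarrow> real"
  assumes [measurable]: "h \<in> borel_measurable M1"
  shows "Var (M1 \<Otimes>\<^sub>M M2) (\<lambda>z. h (fst z)) = Var M1 h"
  using integral_pair_fst[of h] integral_pair_fst[of "\<lambda>x. (h x - Ex M1 h)\<^sup>2"]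
  by (simp add: Var_def Ex_def)

lemma (in pair_prob_space) variance_pair_scaled_plus_AE_one:
  fixes a b :: "'a \<Rightarrow> real" and w :: "'b \<Rightarrow> real"
  assumes [measurable]: "a \<in> borel_measurable M1" "b \<in> borel_measurable M1" "w \<in> borel_measurable M2"
    and w_one: "AE t in M2. w t = 1"
  shows "Var (M1 \<Otimes>\<^sub>M M2) (\<lambda>z. w (snd z) * a (fst z) + b (fst z)) = Var M1 (\<lambda>x. a x + b x)"
proof -
  have "AE z in M1 \<Otimes>\<^sub>M M2. w (snd z) * a (fst z) + b (fst z) = a (fst z) + b (fst z)"
    using w_one by (intro AE_pair_measure) (auto simp: AE_space)
  then have "Var (M1 \<Otimes>\<^sub>M M2) (\<lambda>z. w (snd z) * a (fst z) + b (fst z))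
      = Var (M1 \<Otimes>\<^sub>M M2) (\<lambda>z. a (fst z) + b (fst z))"
    by (rule Var_cong_AE[rotated 2]; measurable)
  also have "\<dots> = Var M1 (\<lambda>x. a x + b x)"
    using Var_pair_fst[of "\<lambda>x. a x + b x"] by simp
  finally show ?thesis .
qed

lemma (in pair_prob_space) variance_pair_scaled_plus:
  fixes a b :: "'a \<Rightarrow> real" and w :: "'b \<Rightarrow> real"
  assumes [measurable]: "a \<in> borel_measurable M1" "b \<in> borel_measurable M1" "w \<in> borel_measurable M2"
    and w2: "integrable M2 (\<lambda>t. (w t)\<^sup>2)" and w_mean: "Ex M2 w = 1"
    and F2: "integrable (M1 \<Otimes>\<^sub>M M2) (\<lambda>z. (w (snd z) * a (fst z) + b (fst z))\<^sup>2)"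
  shows "Var (M1 \<Otimes>\<^sub>M M2) (\<lambda>z. w (snd z) * a (fst z) + b (fst z))
       = Var M2 w * Ex M1 (\<lambda>x. (a x)\<^sup>2) + Var M1 (\<lambda>x. a x + b x)"
proof (cases "AE t in M2. w t = 1")
  case True
  then have "Var M2 w = 0"
    by (simp add: Var_def w_mean integral_eq_zero_AE)
  then show ?thesis
    using variance_pair_scaled_plus_AE_one[OF assms(1-3) True] by simp
next
  case False
  \<comment> \<open>Two slices with different weights recover \<open>a\<close> and \<open>b\<close> as combinations of square-integrable functions.\<close>
  define slice where "slice t \<longleftrightarrow> t \<in> space M2 \<and> integrable M1 (\<lambda>x. (w t * a x + b x)\<^sup>2)" for t
  have slices: "AE t in M2. slice t"
    using AE_integrable_snd'[OF F2] AE_space by eventually_elim (simp add: slice_def)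
  have "\<exists>t0 t1. slice t0 \<and> slice t1 \<and> w t0 \<noteq> w t1"
  proof (rule ccontr)
    assume not_two: "\<not> ?thesis"
    have "\<exists>t. slice t"
    proof (rule ccontr)
      assume "\<nexists>t. slice t"
      then show False
        using M2.AE_contr[OF slices] by simp
    qed
    then obtain t0 where "slice t0" ..
    have "AE t in M2. w t = w t0"
      using slices by eventually_elim (use not_two \<open>slice t0\<close> in blast)
    moreover from this have "w t0 = 1"
      using w_mean by (simp add: Ex_def integral_cong_AE[of w M2 "\<lambda>_. w t0"] M2.prob_space)
    ultimately show False
      using False by simp
  qed
  then obtain t0 t1 where "slice t0" "slice t1" "w t0 \<noteq> w t1"
    by blast
  then have "integrable M1 (\<lambda>x. (a x)\<^sup>2)" "integrable M1 (\<lambda>x. (b x)\<^sup>2)"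
    by (intro square_integrable_of_two_affine[of a M1 b "w t0" "w t1"]; simp add: slice_def)+
  then show ?thesis
    using variance_pair_scaled_plus_square_integrable w2 w_mean by simp
qed

section \<open>The law of one logged record\<close>

lemma measurable_section_snd:
  assumes "(\<lambda>(x, t). f x t) \<in> M \<Otimes>\<^sub>M N \<rightarrow>\<^sub>M K" "t \<in> space N"
  shows "(\<lambda>x. f x t) \<in> M \<rightarrow>\<^sub>M K"
  using measurable_compose[OF measurable_Pair2'[OF assms(2)] assms(1)] by simp

locale logged_data =
  fixes px :: "'x measure" and pt :: "real measure" and T :: real
    and pi0 :: "'x \<Rightarrow> real \<Rightarrow> 'a::finite \<Rightarrow> real"
    and R :: "'x \<Rightarrow> real \<Rightarrow> 'a \<Rightarrow> real measure"
  assumes prob_space_px: "prob_space px"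
    and prob_space_pt: "prob_space pt" and sets_pt: "sets pt = sets borel"
    and pt_support: "AE t in pt. t \<in> {0..T}"
    and R_prob: "\<And>x t a. prob_space (R x t a)" and R_sets: "\<And>x t a. sets (R x t a) = sets borel"
    and R_meas: "(\<lambda>(x, t, a). R x t a) \<in> px \<Otimes>\<^sub>M borel \<Otimes>\<^sub>M count_space UNIV \<rightarrow>\<^sub>M subprob_algebra borel"
    and pi0_nonneg: "\<And>x t a. x \<in> space px \<Longrightarrow> t \<in> {0..T} \<Longrightarrow> 0 \<le> pi0 x t a"
    and pi0_sum: "\<And>x t. x \<in> space px \<Longrightarrow> t \<in> {0..T} \<Longrightarrow> (\<Sum>a\<in>UNIV. pi0 x t a) = 1"
    and pi0_meas: "\<And>a. (\<lambda>(x, t). pi0 x t a) \<in> borel_measurable (px \<Otimes>\<^sub>M borel)"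
begin

sublocale pair_prob_space px pt
  using prob_space_px prob_space_pt
  by (simp add: pair_prob_space_def pair_sigma_finite_def prob_space_imp_sigma_finite)

abbreviation sample_space :: "('x \<times> real \<times> 'a \<times> real) measure" where
  "sample_space \<equiv> px \<Otimes>\<^sub>M borel \<Otimes>\<^sub>M count_space UNIV \<Otimes>\<^sub>M borel"

definition reward_kernel :: "'x \<Rightarrow> real \<Rightarrow> 'a \<Rightarrow> ('x \<times> real \<times> 'a \<times> real) measure" where
  "reward_kernel x t a = distr (R x t a) sample_space (\<lambda>r. (x, t, a, r))"

definition log_kernel :: "'x \<Rightarrow> real \<Rightarrow> ('x \<times> real \<times> 'a \<times> real) measure" where
  "log_kernel x t = actdist (pi0 x t) \<bind> reward_kernel x t"

lemma sets_context: "sets (px \<Otimes>\<^sub>M pt) = sets (px \<Otimes>\<^sub>M borel)"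
  using sets_pt by (intro sets_pair_measure_cong) auto

lemma space_context: "space (px \<Otimes>\<^sub>M pt) = space px \<times> UNIV"
  using sets_eq_imp_space_eq[OF sets_context] by (simp add: space_pair_measure)

lemma measurable_context: "(px \<Otimes>\<^sub>M pt \<rightarrow>\<^sub>M N) = (px \<Otimes>\<^sub>M borel \<rightarrow>\<^sub>M N)"
  by (rule measurable_cong_sets[OF sets_context refl])

lemma T_nonneg: "0 \<le> T"
  using pt_support M2.AE_False by (cases "0 \<le> T") (auto elim: eventually_mono)

lemma AE_context_support: "AE z in px \<Otimes>\<^sub>M pt. snd z \<in> {0..T}"
proof (rule AE_pair_measure)
  have "{z \<in> space (px \<Otimes>\<^sub>M pt). snd z \<in> {0..T}} = space px \<times> {0..T}"
    by (auto simp: space_context)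
  then show "{z \<in> space (px \<Otimes>\<^sub>M pt). snd z \<in> {0..T}} \<in> sets (px \<Otimes>\<^sub>M pt)"
    using sets_pt by auto
qed (use pt_support in simp)

lemma measurable_R_section: "(\<lambda>z. R (fst z) (snd z) a) \<in> px \<Otimes>\<^sub>M borel \<rightarrow>\<^sub>M subprob_algebra borel"
  using measurable_compose[OF _ R_meas, of "\<lambda>z. (fst z, snd z, a)"] by simp

lemma measurable_reward_mean:
  "(\<lambda>(x, t). Ex (R x t a) (\<lambda>r. r)) \<in> borel_measurable (px \<Otimes>\<^sub>M borel)"
  unfolding Ex_def case_prod_beta
  by (rule measurable_compose[OF measurable_R_section integral_measurable_subprob_algebra]) simp

lemma measurable_reward_variance:
  "(\<lambda>(x, t). Var (R x t a) (\<lambda>r. r)) \<in> borel_measurable (px \<Otimes>\<^sub>M borel)"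
proof -
  let ?q = "\<lambda>z. Ex (R (fst z) (snd z) a) (\<lambda>r. r)"
  have [measurable]: "?q \<in> borel_measurable (px \<Otimes>\<^sub>M borel)"
    using measurable_reward_mean[of a] by (simp add: case_prod_beta)
  have "(\<lambda>z. distr (R (fst z) (snd z) a) borel (\<lambda>r. (r - ?q z)\<^sup>2))
      \<in> px \<Otimes>\<^sub>M borel \<rightarrow>\<^sub>M subprob_algebra borel"
    by (intro measurable_distr2[OF _ measurable_R_section]) measurable
  then have "(\<lambda>z. \<integral>u. u \<partial>distr (R (fst z) (snd z) a) borel (\<lambda>r. (r - ?q z)\<^sup>2))
      \<in> borel_measurable (px \<Otimes>\<^sub>M borel)"
    by (rule measurable_compose[OF _ integral_measurable_subprob_algebra]) simp
  moreover have "(\<integral>u. u \<partial>distr (R x t a) borel (\<lambda>r. (r - Ex (R x t a) (\<lambda>r. r))\<^sup>2))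
      = Var (R x t a) (\<lambda>r. r)" for x t
    using R_sets by (subst integral_distr) (auto simp: Var_def cong: measurable_cong_sets)
  ultimately show ?thesis
    by (simp add: case_prod_beta)
qed

lemma prob_space_reward_kernel:
  assumes "x \<in> space px"
  shows "prob_space (reward_kernel x t a)"
  unfolding reward_kernel_def using assms R_sets
  by (intro prob_space.prob_space_distr[OF R_prob]) (simp cong: measurable_cong_sets)

lemma reward_kernel_in_space: "x \<in> space px \<Longrightarrow> reward_kernel x t a \<in> space (subprob_algebra sample_space)"
  using prob_space_reward_kernel
  by (auto simp: space_subprob_algebra reward_kernel_def prob_space_imp_subprob_space)

lemma measurable_reward_kernel:
  "(\<lambda>z. reward_kernel (fst z) (snd z) a) \<in> px \<Otimes>\<^sub>M borel \<rightarrow>\<^sub>M subprob_algebra sample_space"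
  unfolding reward_kernel_def
  by (rule measurable_distr2[where M=borel, OF _ measurable_R_section]) measurable

lemma integral_log_kernel:
  fixes f :: "'x \<times> real \<times> 'a \<times> real \<Rightarrow> real"
  assumes "x \<in> space px" "t \<in> {0..T}" and f: "f \<in> borel_measurable sample_space"
    and "integrable (log_kernel x t) f"
  shows "integral\<^sup>L (log_kernel x t) f = (\<Sum>a\<in>UNIV. pi0 x t a * (\<integral>r. f (x, t, a, r) \<partial>R x t a))"
proof -
  have "integral\<^sup>L (reward_kernel x t a) f = (\<integral>r. f (x, t, a, r) \<partial>R x t a)" for a
    using R_sets \<open>x \<in> space px\<close> unfolding reward_kernel_def
    by (intro integral_distr f) (simp cong: measurable_cong_sets)
  moreover have "integral\<^sup>L (log_kernel x t) f = (\<Sum>a\<in>UNIV. pi0 x t a * integral\<^sup>L (reward_kernel x t a) f)"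
    unfolding log_kernel_def using assms
    by (intro integral_mixture pi0_nonneg) (simp_all add: log_kernel_def reward_kernel_in_space)
  ultimately show ?thesis
    by simp
qed

text \<open>Off the support \<open>[0, T]\<close> of \<open>pt\<close>, \<open>pi0\<close> need not be a distribution, so \<open>log_kernel\<close> need not be a
  probability kernel there. Clamping the time to the support yields a kernel that is, and that agrees
  with \<open>log_kernel\<close> almost everywhere.\<close>

definition clamp :: "real \<Rightarrow> real" where
  "clamp t = (if t \<in> {0..T} then t else 0)"

lemma clamp_in_support: "clamp t \<in> {0..T}"
  using T_nonneg by (simp add: clamp_def)

lemma measurable_clamp_context[measurable]:
  "(\<lambda>z. (fst z, clamp (snd z))) \<in> px \<Otimes>\<^sub>M pt \<rightarrow>\<^sub>M px \<Otimes>\<^sub>M borel"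
  unfolding measurable_context clamp_def by measurable

lemma prob_space_log_kernel_clamped:
  "z \<in> space (px \<Otimes>\<^sub>M pt) \<Longrightarrow> prob_space (log_kernel (fst z) (clamp (snd z)))"
  using clamp_in_support unfolding log_kernel_def
  by (intro prob_space_mixture[where N=sample_space] reward_kernel_in_space prob_space_reward_kernel
      pi0_nonneg pi0_sum) (auto simp: space_context)

lemma measurable_log_kernel_clamped:
  "(\<lambda>z. log_kernel (fst z) (clamp (snd z))) \<in> px \<Otimes>\<^sub>M pt \<rightarrow>\<^sub>M subprob_algebra sample_space"
  unfolding log_kernel_def
proof (rule measurable_mixture)
  show "(\<lambda>z. pi0 (fst z) (clamp (snd z)) a) \<in> borel_measurable (px \<Otimes>\<^sub>M pt)" for a
    using measurable_compose[OF measurable_clamp_context pi0_meas] by simp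
  show "(\<lambda>z. reward_kernel (fst z) (clamp (snd z)) a) \<in> px \<Otimes>\<^sub>M pt \<rightarrow>\<^sub>M subprob_algebra sample_space" for a
    using measurable_compose[OF measurable_clamp_context measurable_reward_kernel] by simp
qed (use clamp_in_support in \<open>auto simp: space_context intro: pi0_nonneg pi0_sum prob_space_reward_kernel\<close>)

lemma sample_law_eq_bind:
  "sample_law px pt pi0 R = (px \<Otimes>\<^sub>M pt) \<bind> (\<lambda>z. log_kernel (fst z) (clamp (snd z)))"
proof -
  have "sample_law px pt pi0 R = (px \<Otimes>\<^sub>M pt) \<bind> (\<lambda>z. log_kernel (fst z) (snd z))"
    by (simp add: sample_law_def log_kernel_def reward_kernel_def[abs_def] case_prod_beta')
  also have "\<dots> = (px \<Otimes>\<^sub>M pt) \<bind> (\<lambda>z. log_kernel (fst z) (clamp (snd z)))"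
    unfolding log_kernel_def
  proof (rule bind_cong_AE_partial_kernel[OF _ _ _ measurable_log_kernel_clamped[unfolded log_kernel_def]])
    show "(\<lambda>z. emeasure (actdist (pi0 (fst z) (snd z)) \<bind> reward_kernel (fst z) (snd z)) X)
        \<in> borel_measurable (px \<Otimes>\<^sub>M pt)" if "X \<in> sets sample_space" for X
      using that pi0_meas measurable_reward_kernel unfolding measurable_context
      by (intro measurable_emeasure_mixture) (simp_all add: case_prod_beta')
    show "sets (actdist (pi0 (fst z) (snd z)) \<bind> reward_kernel (fst z) (snd z)) = sets sample_space"
      if "z \<in> space (px \<Otimes>\<^sub>M pt)" for z
      using that by (intro sets_mixture reward_kernel_in_space) (auto simp: space_context)
    show "space sample_space \<noteq> {}"
      using M1.not_empty by (simp add: space_pair_measure)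
    show "AE z in px \<Otimes>\<^sub>M pt. actdist (pi0 (fst z) (snd z)) \<bind> reward_kernel (fst z) (snd z)
        = actdist (pi0 (fst z) (clamp (snd z))) \<bind> reward_kernel (fst z) (clamp (snd z))"
      using AE_context_support by eventually_elim (simp add: clamp_def)
  qed
  finally show ?thesis .
qed

lemma sets_sample_law: "sets (sample_law px pt pi0 R) = sets sample_space"
  unfolding sample_law_eq_bind
  by (rule sets_bind_measurable[OF measurable_log_kernel_clamped]) (simp add: space_context M1.not_empty)

lemma prob_space_sample_law: "prob_space (sample_law px pt pi0 R)"
  unfolding sample_law_eq_bind
  by (rule prob_space_bind[OF AE_I2[OF prob_space_log_kernel_clamped] measurable_log_kernel_clamped])

lemma variance_sample_law:
  fixes Y :: "'x \<times> real \<times> 'a \<times> real \<Rightarrow> real" and \<mu> v :: "'x \<times> real \<Rightarrow> real"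
  assumes Y[measurable]: "Y \<in> borel_measurable sample_space"
    and Y2: "integrable (sample_law px pt pi0 R) (\<lambda>\<omega>. (Y \<omega>)\<^sup>2)"
    and [measurable]: "\<mu> \<in> borel_measurable (px \<Otimes>\<^sub>M pt)" "v \<in> borel_measurable (px \<Otimes>\<^sub>M pt)"
    and mean: "\<And>x t. x \<in> space px \<Longrightarrow> t \<in> {0..T} \<Longrightarrow>
      (\<Sum>a\<in>UNIV. pi0 x t a * (\<integral>r. Y (x, t, a, r) \<partial>R x t a)) = \<mu> (x, t)"
    and second_moment: "\<And>x t. x \<in> space px \<Longrightarrow> t \<in> {0..T} \<Longrightarrow>
      (\<Sum>a\<in>UNIV. pi0 x t a * (\<integral>r. (Y (x, t, a, r))\<^sup>2 \<partial>R x t a)) = v (x, t) + (\<mu> (x, t))\<^sup>2"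
  shows "Var (sample_law px pt pi0 R) Y = Ex (px \<Otimes>\<^sub>M pt) v + Var (px \<Otimes>\<^sub>M pt) \<mu>"
    and "integrable (px \<Otimes>\<^sub>M pt) v" and "integrable (px \<Otimes>\<^sub>M pt) (\<lambda>z. (\<mu> z)\<^sup>2)"
proof -
  let ?K = "\<lambda>z. log_kernel (fst z) (clamp (snd z))"
  have Y2_bind: "integrable ((px \<Otimes>\<^sub>M pt) \<bind> ?K) (\<lambda>\<omega>. (Y \<omega>)\<^sup>2)"
    using Y2 unfolding sample_law_eq_bind .
  have "Y \<in> borel_measurable (sample_law px pt pi0 R)"
    unfolding measurable_cong_sets[OF sets_sample_law refl] by (rule Y)
  then have "integrable (sample_law px pt pi0 R) Y"
    using Y2 by (rule finite_measure.square_integrable_imp_integrable[OF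
          prob_space.finite_measure[OF prob_space_sample_law]])
  then have Y1_bind: "integrable ((px \<Otimes>\<^sub>M pt) \<bind> ?K) Y"
    unfolding sample_law_eq_bind .
  note inner = AE_integrable_bind_kernel[OF measurable_log_kernel_clamped Y Y1_bind]
    AE_integrable_bind_kernel[OF measurable_log_kernel_clamped borel_measurable_power[OF Y] Y2_bind]
  have mean_AE: "AE z in px \<Otimes>\<^sub>M pt. integral\<^sup>L (?K z) Y = \<mu> z"
    using inner(1) AE_context_support AE_space
  proof eventually_elim
    case (elim z)
    then obtain x t where "z = (x, t)" "x \<in> space px" "t \<in> {0..T}" "clamp t = t"
      by (cases z) (auto simp: space_context clamp_def)
    then show ?case
      using elim integral_log_kernel[OF _ _ Y] mean by simp
  qed
  have second_moment_AE:
    "AE z in px \<Otimes>\<^sub>M pt. integral\<^sup>L (?K z) (\<lambda>\<omega>. (Y \<omega>)\<^sup>2) = v z + (\<mu> z)\<^sup>2"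
    using inner(2) AE_context_support AE_space
  proof eventually_elim
    case (elim z)
    then obtain x t where "z = (x, t)" "x \<in> space px" "t \<in> {0..T}" "clamp t = t"
      by (cases z) (auto simp: space_context clamp_def)
    then show ?case
      using elim integral_log_kernel[OF _ _ borel_measurable_power[OF Y]] second_moment by simp
  qed
  note total = variance_bind[OF prob_space_axioms measurable_log_kernel_clamped prob_space_log_kernel_clamped
      Y Y2_bind assms(3,4) mean_AE second_moment_AE]
  show "Var (sample_law px pt pi0 R) Y = Ex (px \<Otimes>\<^sub>M pt) v + Var (px \<Otimes>\<^sub>M pt) \<mu>"
    "integrable (px \<Otimes>\<^sub>M pt) v" "integrable (px \<Otimes>\<^sub>M pt) (\<lambda>z. (\<mu> z)\<^sup>2)"
    using total unfolding sample_law_eq_bind by simp_all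
qed

end

section \<open>The OPFV gradient estimator\<close>

locale opfv_model = logged_data px pt T pi0 R
  for px :: "'x measure" and pt T and pi0 :: "'x \<Rightarrow> real \<Rightarrow> 'a::finite \<Rightarrow> real" and R +
  fixes piz fhat s :: "'x \<Rightarrow> real \<Rightarrow> 'a \<Rightarrow> real" and \<phi> :: "real \<Rightarrow> 'l" and t' r_max :: real
  assumes R_bounded: "\<And>x t a. x \<in> space px \<Longrightarrow> t \<in> {0..T} \<Longrightarrow> AE r in R x t a. 0 \<le> r \<and> r \<le> r_max"
    and pi0_pos: "\<And>x t a. x \<in> space px \<Longrightarrow> t \<in> {0..T} \<Longrightarrow> 0 < pi0 x t a"
    and piz_meas: "\<And>a. (\<lambda>(x, t). piz x t a) \<in> borel_measurable (px \<Otimes>\<^sub>M borel)"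
    and s_meas: "\<And>a. (\<lambda>(x, t). s x t a) \<in> borel_measurable (px \<Otimes>\<^sub>M borel)"
    and fhat_meas: "\<And>a. (\<lambda>(x, t). fhat x t a) \<in> borel_measurable (px \<Otimes>\<^sub>M borel)"
    and phi_meas: "{u. \<phi> u = \<phi> t'} \<in> sets borel"
    and pphi_pos: "0 < pphi pt T \<phi> t'"
    and shift: "\<And>x t a. x \<in> space px \<Longrightarrow> t \<in> {0..T} \<Longrightarrow> \<phi> t = \<phi> t' \<Longrightarrow>
      Ex (R x t a) (\<lambda>r. r) - Ex (R x t' a) (\<lambda>r. r) = fhat x t a - fhat x t' a"
    and opfv_meas: "opfv_term pt T \<phi> t' pi0 piz fhat s \<in> borel_measurable (sample_law px pt pi0 R)"
    and opfv_square_integrable: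
      "integrable (sample_law px pt pi0 R) (\<lambda>\<omega>. (opfv_term pt T \<phi> t' pi0 piz fhat s \<omega>)\<^sup>2)"
begin

abbreviation q :: "'x \<Rightarrow> real \<Rightarrow> 'a \<Rightarrow> real" where
  "q x t a \<equiv> Ex (R x t a) (\<lambda>r. r)"

abbreviation \<sigma>2 :: "'x \<Rightarrow> real \<Rightarrow> 'a \<Rightarrow> real" where
  "\<sigma>2 x t a \<equiv> Var (R x t a) (\<lambda>r. r)"

definition time_weight :: "real \<Rightarrow> real" where
  "time_weight t = (if \<phi> t = \<phi> t' then 1 else 0) / pphi pt T \<phi> t'"

lemma time_weight_indicator: "time_weight = (\<lambda>t. indicator {u. \<phi> u = \<phi> t'} t / pphi pt T \<phi> t')"
  by (simp add: fun_eq_iff time_weight_def indicator_def)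

lemma measurable_time_weight[measurable]: "time_weight \<in> borel_measurable pt"
  using phi_meas unfolding time_weight_indicator measurable_cong_sets[OF sets_pt refl] by measurable

lemma pphi_eq_measure: "pphi pt T \<phi> t' = measure pt {u. \<phi> u = \<phi> t'}"
  unfolding pphi_def
proof (rule measure_eq_AE)
  show "AE u in pt. (u \<in> {s \<in> {0..T}. \<phi> s = \<phi> t'}) = (u \<in> {u. \<phi> u = \<phi> t'})"
    using pt_support by eventually_elim auto
  have "{s \<in> {0..T}. \<phi> s = \<phi> t'} = {0..T} \<inter> {u. \<phi> u = \<phi> t'}"
    by blast
  then show "{s \<in> {0..T}. \<phi> s = \<phi> t'} \<in> sets pt"
    unfolding sets_pt using phi_meas by (simp only: sets.Int atLeastAtMost_borel)
  show "{u. \<phi> u = \<phi> t'} \<in> sets pt"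
    unfolding sets_pt by (rule phi_meas)
qed

lemma
  shows square_integrable_time_weight: "integrable pt (\<lambda>t. (time_weight t)\<^sup>2)"
    and Ex_time_weight: "Ex pt time_weight = 1"
proof -
  have A: "{u. \<phi> u = \<phi> t'} \<in> sets pt"
    using phi_meas sets_pt by simp
  have "(\<lambda>t. (time_weight t)\<^sup>2) = (\<lambda>t. indicator {u. \<phi> u = \<phi> t'} t / (pphi pt T \<phi> t')\<^sup>2)"
    by (auto simp: time_weight_def indicator_def power2_eq_square)
  then show "integrable pt (\<lambda>t. (time_weight t)\<^sup>2)"
    using A by (simp add: M2.emeasure_eq_measure)
  show "Ex pt time_weight = 1"
    using A pphi_pos unfolding Ex_def time_weight_indicator by (simp add: pphi_eq_measure)
qed

definition dm_term :: "'x \<Rightarrow> real" where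
  "dm_term x = aexp (piz x t') (\<lambda>a. fhat x t' a * s x t' a)"

definition residual_term :: "'x \<Rightarrow> real" where
  "residual_term x = aexp (piz x t') (\<lambda>a. (q x t' a - fhat x t' a) * s x t' a)"

definition weighted_residual :: "'x \<Rightarrow> real \<Rightarrow> 'a \<Rightarrow> real" where
  "weighted_residual x t a = piz x t' a / pi0 x t a * (q x t' a - fhat x t' a) * s x t' a"

definition opfv_weight :: "'x \<Rightarrow> real \<Rightarrow> 'a \<Rightarrow> real" where
  "opfv_weight x t a = time_weight t * (piz x t' a / pi0 x t a) * s x t' a"

definition noise_term :: "'x \<Rightarrow> real \<Rightarrow> real" where
  "noise_term x t = (\<Sum>a\<in>UNIV. pi0 x t a * ((opfv_weight x t a)\<^sup>2 * \<sigma>2 x t a))"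

lemma opfv_term_affine:
  "opfv_term pt T \<phi> t' pi0 piz fhat s (x, t, a, r)
     = opfv_weight x t a * r + (dm_term x - opfv_weight x t a * fhat x t a)"
  by (simp add: opfv_term_def opfv_weight_def dm_term_def time_weight_def divide_inverse algebra_simps)

(* This is where the hypothesis shift enters, and the only place. *)
lemma opfv_weight_residual:
  assumes "x \<in> space px" "t \<in> {0..T}"
  shows "opfv_weight x t a * (q x t a - fhat x t a) = time_weight t * weighted_residual x t a"
proof (cases "\<phi> t = \<phi> t'")
  case True
  then have "q x t a - fhat x t a = q x t' a - fhat x t' a"
    using shift[OF assms True, of a] by simp
  then show ?thesis
    by (simp add: opfv_weight_def weighted_residual_def)
qed (simp add: opfv_weight_def time_weight_def)

lemma aexp_weighted_residual:
  assumes "x \<in> space px" "t \<in> {0..T}"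
  shows "aexp (pi0 x t) (weighted_residual x t) = residual_term x"
  using pi0_pos[OF assms]
  by (simp add: aexp_def residual_term_def weighted_residual_def less_imp_neq[symmetric] mult.assoc)

lemma
  assumes "x \<in> space px" "t \<in> {0..T}"
  shows reward_measurable: "(\<lambda>r. r) \<in> borel_measurable (R x t a)"
    and reward_square_integrable: "integrable (R x t a) (\<lambda>r. r\<^sup>2)"
proof -
  show meas: "(\<lambda>r. r) \<in> borel_measurable (R x t a)"
    using R_sets by (simp cong: measurable_cong_sets)
  have "AE r in R x t a. norm (r\<^sup>2) \<le> r_max\<^sup>2"
    using R_bounded[OF assms] by eventually_elim (simp add: power_mono)
  then show "integrable (R x t a) (\<lambda>r. r\<^sup>2)"
    using meas by (intro finite_measure.integrable_const_bound prob_space.finite_measure R_prob) auto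
qed

lemma reward_integral_opfv_term:
  assumes "x \<in> space px" "t \<in> {0..T}"
  shows "(\<integral>r. opfv_term pt T \<phi> t' pi0 piz fhat s (x, t, a, r) \<partial>R x t a)
      = time_weight t * weighted_residual x t a + dm_term x"
    and "(\<integral>r. (opfv_term pt T \<phi> t' pi0 piz fhat s (x, t, a, r))\<^sup>2 \<partial>R x t a)
      = (opfv_weight x t a)\<^sup>2 * \<sigma>2 x t a + (time_weight t * weighted_residual x t a + dm_term x)\<^sup>2"
proof -
  let ?c = "opfv_weight x t a" and ?d = "dm_term x - opfv_weight x t a * fhat x t a"
  note reward = R_prob reward_measurable[OF assms] reward_square_integrable[OF assms]
  have mean: "?c * q x t a + ?d = time_weight t * weighted_residual x t a + dm_term x"
    using opfv_weight_residual[OF assms, of a] by (simp add: algebra_simps)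
  have "(\<integral>r. opfv_term pt T \<phi> t' pi0 piz fhat s (x, t, a, r) \<partial>R x t a) = Ex (R x t a) (\<lambda>r. ?c * r + ?d)"
    by (simp add: opfv_term_affine Ex_def)
  also have "\<dots> = time_weight t * weighted_residual x t a + dm_term x"
    unfolding Ex_affine[OF reward] by (rule mean)
  finally show "(\<integral>r. opfv_term pt T \<phi> t' pi0 piz fhat s (x, t, a, r) \<partial>R x t a)
      = time_weight t * weighted_residual x t a + dm_term x" .
  have "(\<integral>r. (opfv_term pt T \<phi> t' pi0 piz fhat s (x, t, a, r))\<^sup>2 \<partial>R x t a)
      = Ex (R x t a) (\<lambda>r. (?c * r + ?d)\<^sup>2)"
    by (simp add: opfv_term_affine Ex_def)
  also have "\<dots> = ?c\<^sup>2 * \<sigma>2 x t a + (time_weight t * weighted_residual x t a + dm_term x)\<^sup>2"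
    unfolding Ex_affine_square[OF reward] mean ..
  finally show "(\<integral>r. (opfv_term pt T \<phi> t' pi0 piz fhat s (x, t, a, r))\<^sup>2 \<partial>R x t a)
      = ?c\<^sup>2 * \<sigma>2 x t a + (time_weight t * weighted_residual x t a + dm_term x)\<^sup>2" .
qed

lemma conditional_mean_opfv_term:
  assumes "x \<in> space px" "t \<in> {0..T}"
  shows "(\<Sum>a\<in>UNIV. pi0 x t a * (\<integral>r. opfv_term pt T \<phi> t' pi0 piz fhat s (x, t, a, r) \<partial>R x t a))
      = time_weight t * residual_term x + dm_term x"
proof -
  have "(\<Sum>a\<in>UNIV. pi0 x t a * (\<integral>r. opfv_term pt T \<phi> t' pi0 piz fhat s (x, t, a, r) \<partial>R x t a))
      = aexp (pi0 x t) (\<lambda>a. time_weight t * weighted_residual x t a + dm_term x)"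
    by (simp add: aexp_def reward_integral_opfv_term[OF assms])
  then show ?thesis
    by (simp add: aexp_affine[OF pi0_sum[OF assms]] aexp_weighted_residual[OF assms])
qed

lemma conditional_second_moment_opfv_term:
  assumes "x \<in> space px" "t \<in> {0..T}"
  shows "(\<Sum>a\<in>UNIV. pi0 x t a * (\<integral>r. (opfv_term pt T \<phi> t' pi0 piz fhat s (x, t, a, r))\<^sup>2 \<partial>R x t a))
      = noise_term x t + (time_weight t)\<^sup>2 * avar (pi0 x t) (weighted_residual x t) + (time_weight t * residual_term x + dm_term x)\<^sup>2"
proof -
  have "(\<Sum>a\<in>UNIV. pi0 x t a * (\<integral>r. (opfv_term pt T \<phi> t' pi0 piz fhat s (x, t, a, r))\<^sup>2 \<partial>R x t a))
      = noise_term x t + aexp (pi0 x t) (\<lambda>a. (time_weight t * weighted_residual x t a + dm_term x)\<^sup>2)"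
    by (simp add: aexp_def noise_term_def reward_integral_opfv_term[OF assms] distrib_left sum.distrib)
  then show ?thesis
    by (simp add: aexp_affine_square[OF pi0_sum[OF assms]] aexp_weighted_residual[OF assms])
qed

lemma noise_term_nonneg: "x \<in> space px \<Longrightarrow> t \<in> {0..T} \<Longrightarrow> 0 \<le> noise_term x t"
  unfolding noise_term_def using pi0_nonneg
  by (intro sum_nonneg mult_nonneg_nonneg) (simp_all add: Var_def integral_nonneg)

lemma measurable_at_target[measurable]:
  "(\<lambda>x. piz x t' a) \<in> borel_measurable px" "(\<lambda>x. s x t' a) \<in> borel_measurable px"
  "(\<lambda>x. fhat x t' a) \<in> borel_measurable px" "(\<lambda>x. q x t' a) \<in> borel_measurable px"
  using piz_meas s_meas fhat_meas measurable_reward_mean by (auto intro: measurable_section_snd)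

lemma measurable_context_functions[measurable]:
  "(\<lambda>z. pi0 (fst z) (snd z) a) \<in> borel_measurable (px \<Otimes>\<^sub>M pt)"
  "(\<lambda>z. \<sigma>2 (fst z) (snd z) a) \<in> borel_measurable (px \<Otimes>\<^sub>M pt)"
  using pi0_meas measurable_reward_variance unfolding measurable_context by (simp_all add: case_prod_beta)

lemma measurable_terms[measurable]:
  "dm_term \<in> borel_measurable px" "residual_term \<in> borel_measurable px"
  "(\<lambda>z. noise_term (fst z) (snd z)) \<in> borel_measurable (px \<Otimes>\<^sub>M pt)"
  "(\<lambda>z. avar (pi0 (fst z) (snd z)) (weighted_residual (fst z) (snd z))) \<in> borel_measurable (px \<Otimes>\<^sub>M pt)"
  unfolding dm_term_def residual_term_def noise_term_def opfv_weight_def avar_def aexp_def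
    weighted_residual_def by measurable

lemma variance_opfv_term:
  defines "noise \<equiv> \<lambda>z. noise_term (fst z) (snd z)"
    and "spread \<equiv> \<lambda>z. (time_weight (snd z))\<^sup>2 * avar (pi0 (fst z) (snd z)) (weighted_residual (fst z) (snd z))"
    and "\<mu> \<equiv> \<lambda>z. time_weight (snd z) * residual_term (fst z) + dm_term (fst z)"
  shows "Var (sample_law px pt pi0 R) (opfv_term pt T \<phi> t' pi0 piz fhat s)
      = Ex (px \<Otimes>\<^sub>M pt) noise + Ex (px \<Otimes>\<^sub>M pt) spread + Var (px \<Otimes>\<^sub>M pt) \<mu>"
    and "integrable (px \<Otimes>\<^sub>M pt) (\<lambda>z. (\<mu> z)\<^sup>2)"
proof -
  let ?Y = "opfv_term pt T \<phi> t' pi0 piz fhat s"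
  have Y_meas: "?Y \<in> borel_measurable sample_space"
    using opfv_meas by (simp add: measurable_cong_sets[OF sets_sample_law refl])
  have [measurable]: "\<mu> \<in> borel_measurable (px \<Otimes>\<^sub>M pt)" "noise \<in> borel_measurable (px \<Otimes>\<^sub>M pt)"
    "spread \<in> borel_measurable (px \<Otimes>\<^sub>M pt)"
    unfolding \<mu>_def noise_def spread_def by measurable
  have sum_meas: "(\<lambda>z. noise z + spread z) \<in> borel_measurable (px \<Otimes>\<^sub>M pt)"
    by measurable
  have "(\<Sum>a\<in>UNIV. pi0 x t a * (\<integral>r. ?Y (x, t, a, r) \<partial>R x t a)) = \<mu> (x, t)"
    "(\<Sum>a\<in>UNIV. pi0 x t a * (\<integral>r. (?Y (x, t, a, r))\<^sup>2 \<partial>R x t a))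
      = (\<lambda>z. noise z + spread z) (x, t) + (\<mu> (x, t))\<^sup>2"
    if "x \<in> space px" "t \<in> {0..T}" for x t
    using that by (simp_all add: \<mu>_def noise_def spread_def conditional_mean_opfv_term
        conditional_second_moment_opfv_term)
  note total = variance_sample_law[OF Y_meas opfv_square_integrable \<open>\<mu> \<in> _\<close> sum_meas this]
  have nonneg: "AE z in px \<Otimes>\<^sub>M pt. 0 \<le> noise z \<and> 0 \<le> spread z"
    using AE_context_support AE_space
    by eventually_elim (auto simp: noise_def spread_def space_context noise_term_nonneg pi0_nonneg avar_nonneg)
  have "integrable (px \<Otimes>\<^sub>M pt) noise"
  proof (rule Bochner_Integration.integrable_bound[OF total(2)])
    show "AE z in px \<Otimes>\<^sub>M pt. norm (noise z) \<le> norm (noise z + spread z)"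
      using nonneg by eventually_elim simp
  qed measurable
  moreover have "integrable (px \<Otimes>\<^sub>M pt) spread"
  proof (rule Bochner_Integration.integrable_bound[OF total(2)])
    show "AE z in px \<Otimes>\<^sub>M pt. norm (spread z) \<le> norm (noise z + spread z)"
      using nonneg by eventually_elim simp
  qed measurable
  ultimately show "Var (sample_law px pt pi0 R) ?Y
      = Ex (px \<Otimes>\<^sub>M pt) noise + Ex (px \<Otimes>\<^sub>M pt) spread + Var (px \<Otimes>\<^sub>M pt) \<mu>"
    using total(1) by (simp add: Ex_def)
  show "integrable (px \<Otimes>\<^sub>M pt) (\<lambda>z. (\<mu> z)\<^sup>2)"
    by (rule total(3))
qed

lemma variance_conditional_mean_opfv_term:
  assumes "integrable (px \<Otimes>\<^sub>M pt) (\<lambda>z. (time_weight (snd z) * residual_term (fst z) + dm_term (fst z))\<^sup>2)"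
  shows "Var (px \<Otimes>\<^sub>M pt) (\<lambda>z. time_weight (snd z) * residual_term (fst z) + dm_term (fst z))
      = Var pt time_weight * Ex px (\<lambda>x. (residual_term x)\<^sup>2)
        + Var px (\<lambda>x. aexp (piz x t') (\<lambda>a. q x t' a * s x t' a))"
proof -
  have "(\<lambda>x. residual_term x + dm_term x) = (\<lambda>x. aexp (piz x t') (\<lambda>a. q x t' a * s x t' a))"
    by (simp add: fun_eq_iff residual_term_def dm_term_def aexp_def algebra_simps sum.distrib[symmetric])
  then show ?thesis
    using assms by (subst variance_pair_scaled_plus) (simp_all add: square_integrable_time_weight Ex_time_weight)
qed

theorem n_variance_opfv_grad:
  assumes n: "n > 0"
  shows "real n * Var (PiM {..<n} (\<lambda>_. sample_law px pt pi0 R)) (opfv_grad n pt T \<phi> t' pi0 piz fhat s)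
       = Ex (px \<Otimes>\<^sub>M pt) (\<lambda>(x, t). \<Sum>a\<in>UNIV. pi0 x t a *
              ((time_weight t * (piz x t' a / pi0 x t a) * s x t' a)\<^sup>2 * \<sigma>2 x t a))
       + Ex (px \<Otimes>\<^sub>M pt) (\<lambda>(x, t). (time_weight t)\<^sup>2 *
              avar (pi0 x t) (\<lambda>a. piz x t' a / pi0 x t a * (q x t' a - fhat x t' a) * s x t' a))
       + Var pt time_weight * Ex px (\<lambda>x. (aexp (piz x t') (\<lambda>a. (q x t' a - fhat x t' a) * s x t' a))\<^sup>2)
       + Var px (\<lambda>x. aexp (piz x t') (\<lambda>a. q x t' a * s x t' a))"
proof -
  have "real n * Var (PiM {..<n} (\<lambda>_. sample_law px pt pi0 R)) (opfv_grad n pt T \<phi> t' pi0 piz fhat s)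
      = Var (sample_law px pt pi0 R) (opfv_term pt T \<phi> t' pi0 piz fhat s)"
    using variance_sample_mean_iid[OF prob_space_sample_law opfv_meas opfv_square_integrable n]
    by (simp add: opfv_grad_def[abs_def])
  also note variance_opfv_term(1)
  finally show ?thesis
    using variance_conditional_mean_opfv_term[OF variance_opfv_term(2)]
    by (simp add: case_prod_beta' noise_term_def opfv_weight_def weighted_residual_def[abs_def] residual_term_def)
qed

end

theorem propositionF4:
  fixes px :: "'x measure" and pt :: "real measure"
    and pi0 :: "'x \<Rightarrow> real \<Rightarrow> 'a::finite \<Rightarrow> real"
    and R :: "'x \<Rightarrow> real \<Rightarrow> 'a \<Rightarrow> real measure"
    and pi_fun :: "real^'d \<Rightarrow> 'x \<Rightarrow> real \<Rightarrow> 'a \<Rightarrow> real"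
    and \<zeta> :: "real^'d" and j :: 'd
    and s :: "'x \<Rightarrow> real \<Rightarrow> 'a \<Rightarrow> real"
    and fhat :: "'x \<Rightarrow> real \<Rightarrow> 'a \<Rightarrow> real"
    and \<phi> :: "real \<Rightarrow> 'l"
    and T t' r_max :: real and n :: nat
  defines "q \<equiv> \<lambda>x t a. Ex (R x t a) (\<lambda>r. r)"
    and "\<sigma>2 \<equiv> \<lambda>x t a. Var (R x t a) (\<lambda>r. r)"
    and "piz \<equiv> pi_fun \<zeta>"
    and "P \<equiv> pphi pt T \<phi> t'"
    and "w \<equiv> \<lambda>t. (if \<phi> t = \<phi> t' then 1 else 0) / pphi pt T \<phi> t'"
    and "M1 \<equiv> sample_law px pt pi0 R"
  assumes px: "prob_space px"
    and pt: "prob_space pt" "sets pt = sets borel" "AE t in pt. t \<in> {0..T}"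
    and target: "T < t'" and n_pos: "n > 0"
    and R_prob: "\<And>x t a. prob_space (R x t a)"
    and R_sets: "\<And>x t a. sets (R x t a) = sets borel"
    and R_bounded: "\<And>x t a. x \<in> space px \<Longrightarrow> t \<ge> 0 \<Longrightarrow> AE r in R x t a. 0 \<le> r \<and> r \<le> r_max"
    and R_meas: "(\<lambda>(x, t, a). R x t a)
                   \<in> px \<Otimes>\<^sub>M borel \<Otimes>\<^sub>M count_space UNIV \<rightarrow>\<^sub>M subprob_algebra borel"
    and pi0_pos: "\<And>x t a. x \<in> space px \<Longrightarrow> t \<in> {0..T} \<Longrightarrow> pi0 x t a > 0"
    and pi0_sum: "\<And>x t. x \<in> space px \<Longrightarrow> t \<in> {0..T} \<Longrightarrow> (\<Sum>a\<in>UNIV. pi0 x t a) = 1"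
    and pi0_meas: "\<And>a. (\<lambda>(x, t). pi0 x t a) \<in> borel_measurable (px \<Otimes>\<^sub>M borel)"
    and pi_nonneg: "\<And>z x t a. x \<in> space px \<Longrightarrow> t \<ge> 0 \<Longrightarrow> pi_fun z x t a \<ge> 0"
    and pi_sum: "\<And>z x t. x \<in> space px \<Longrightarrow> t \<ge> 0 \<Longrightarrow> (\<Sum>a\<in>UNIV. pi_fun z x t a) = 1"
    and pi_meas: "\<And>z a. (\<lambda>(x, t). pi_fun z x t a) \<in> borel_measurable (px \<Otimes>\<^sub>M borel)"
    and pi_diff: "\<And>x t a. x \<in> space px \<Longrightarrow> t \<ge> 0 \<Longrightarrow>
                    (\<lambda>z. pi_fun z x t a) differentiable (at \<zeta>)"
    and score: "\<And>x t a. x \<in> space px \<Longrightarrow> t \<ge> 0 \<Longrightarrow> pi_fun \<zeta> x t a > 0 \<Longrightarrow>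
                  ((\<lambda>h. ln (pi_fun (\<zeta> + h *\<^sub>R axis j 1) x t a)) has_real_derivative s x t a) (at 0)"
    and s_meas: "\<And>a. (\<lambda>(x, t). s x t a) \<in> borel_measurable (px \<Otimes>\<^sub>M borel)"
    and fhat_meas: "\<And>a. (\<lambda>(x, t). fhat x t a) \<in> borel_measurable (px \<Otimes>\<^sub>M borel)"
    and phi_meas: "{u. \<phi> u = \<phi> t'} \<in> sets borel"
    and P_pos: "P > 0"
    and shift: "\<And>x t a. x \<in> space px \<Longrightarrow> t \<in> {0..T} \<Longrightarrow> \<phi> t = \<phi> t' \<Longrightarrow>
                  q x t a - q x t' a = fhat x t a - fhat x t' a"
    and finite_var: "opfv_term pt T \<phi> t' pi0 piz fhat s \<in> borel_measurable M1"
       "integrable M1 (\<lambda>\<omega>. (opfv_term pt T \<phi> t' pi0 piz fhat s \<omega>)\<^sup>2)"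
  shows "real n * Var (PiM {..<n} (\<lambda>_. M1)) (opfv_grad n pt T \<phi> t' pi0 piz fhat s)
       = Ex (px \<Otimes>\<^sub>M pt) (\<lambda>(x, t). \<Sum>a\<in>UNIV. pi0 x t a *
              ((w t * (piz x t' a / pi0 x t a) * s x t' a)\<^sup>2 * \<sigma>2 x t a))
       + Ex (px \<Otimes>\<^sub>M pt) (\<lambda>(x, t). (w t)\<^sup>2 *
              avar (pi0 x t) (\<lambda>a. piz x t' a / pi0 x t a * (q x t' a - fhat x t' a) * s x t' a))
       + Var pt w * Ex px (\<lambda>x. (aexp (piz x t') (\<lambda>a. (q x t' a - fhat x t' a) * s x t' a))\<^sup>2)
       + Var px (\<lambda>x. aexp (piz x t') (\<lambda>a. q x t' a * s x t' a))"
proof -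
  have model: "opfv_model px pt T pi0 R piz fhat s \<phi> t' r_max"
  proof (intro opfv_model.intro logged_data.intro opfv_model_axioms.intro)
    show "0 \<le> pi0 x t a" if "x \<in> space px" "t \<in> {0..T}" for x t a
      using pi0_pos[OF that] by (rule less_imp_le)
    show "AE r in R x t a. 0 \<le> r \<and> r \<le> r_max" if "x \<in> space px" "t \<in> {0..T}" for x t a
      using R_bounded that by simp
    show "0 < pphi pt T \<phi> t'"
      using P_pos by (simp add: P_def)
    show "Ex (R x t a) (\<lambda>r. r) - Ex (R x t' a) (\<lambda>r. r) = fhat x t a - fhat x t' a"
      if "x \<in> space px" "t \<in> {0..T}" "\<phi> t = \<phi> t'" for x t a
      using shift[OF that] by (simp add: q_def)
  qed (fact px pt R_prob R_sets R_meas pi0_sum pi0_meas pi0_pos s_meas fhat_meas phi_meas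
      finite_var[unfolded M1_def] | simp add: piz_def pi_meas)+
  have "w = opfv_model.time_weight pt T \<phi> t'"
    by (simp add: fun_eq_iff w_def opfv_model.time_weight_def[OF model])
  then show ?thesis
    using opfv_model.n_variance_opfv_grad[OF model n_pos]
    unfolding q_def \<sigma>2_def M1_def by simp
qed

end
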